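(* In the setting of a joint distribution $p(X,C)$ on finite $\mathcal X\times\mathcal C$, let $\epsilon>0$, $\Delta=\frac{\epsilon}{4(1+|\mathcal C|)}$ and let $J$ be a positive integer with $J\ge\frac{4(1+|\mathcal C|)}{\epsilon}\ln\frac{8(1+|\mathcal C|)}{\epsilon}$. For $x\in\mathcal X$ define $$\eta_1(\mathbf x)=\bigoplus_{j=1}^J\tau(p(x),w_j,j)\oplus\bigoplus_{j=1}^J\bigoplus_{c\in\mathcal C}\tau(p(c,x),w_j,j),\qquad \eta_2(\mathbf x)=\bigoplus_{j=1}^J\tau(p(x),w_j,j)\oplus\bigoplus_{j=1}^J\bigoplus_{c\in\mathcal C}\big(-\tau(p(c,x),w_j,j)\big),$$ where $p(x)=\sum_{c}p(c,x)$. Then for all $x,y\in\mathcal X$ with $x\ne y$, $\left|\mathrm{MIL}(\mathbf x,\mathbf y)-\langle\eta_1(\mathbf x),\eta_2(\mathbf y)\rangle\right|\le\epsilon$.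
   Context: $\mathbf x=[p(c,x)]_{c\in\mathcal C}$. $\mathrm{MIL}(\mathbf x,\mathbf y)=I(X;C)-I(\pi_{x,y}(X);C)$, where $\pi_{x,y}$ merges $x$ and $y$ into a single new value and fixes all other values. $\rho(w)=\frac{2\,\mathrm{sech}(\pi w)}{1+4w^2}$, $w_j=(j-\frac12)\Delta$, and for $u\in(0,1]$, $\tau(u,w,j)=\left[\cos(w\ln u)\sqrt{2u\int_{(j-1)\Delta}^{j\Delta}\rho},\ \sin(w\ln u)\sqrt{2u\int_{(j-1)\Delta}^{j\Delta}\rho}\right]\in\mathbb R^2$, with $\tau(0,w,j)=(0,0)$. $\bigoplus$ denotes concatenation and $\langle\cdot,\cdot\rangle$ the Euclidean inner product. *)

theory Defs
  imports "HOL-Analysis.Analysis"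
begin

text \<open>Joint distribution p(c,x) on finite C x X is a function p :: 'c => 'x => real.\<close>

definition marg_X :: "('c::finite \<Rightarrow> 'u \<Rightarrow> real) \<Rightarrow> 'u \<Rightarrow> real" where
  "marg_X q u = (\<Sum>c\<in>UNIV. q c u)"

definition marg_C :: "('c \<Rightarrow> 'u::finite \<Rightarrow> real) \<Rightarrow> 'c \<Rightarrow> real" where
  "marg_C q c = (\<Sum>u\<in>UNIV. q c u)"

definition mutual_inf :: "('c::finite \<Rightarrow> 'u::finite \<Rightarrow> real) \<Rightarrow> real" where
  "mutual_inf q = (\<Sum>u\<in>UNIV. \<Sum>c\<in>UNIV.
      if q c u = 0 then 0 else q c u * ln (q c u / (marg_X q u * marg_C q c)))"

text \<open>pi_{x,y}: merges x and y into the single new value None, and maps every other z to Some z.\<close>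
definition merge_map :: "'x \<Rightarrow> 'x \<Rightarrow> 'x \<Rightarrow> 'x option" where
  "merge_map x y z = (if z = x \<or> z = y then None else Some z)"

definition merged_dist :: "('c \<Rightarrow> 'x::finite \<Rightarrow> real) \<Rightarrow> 'x \<Rightarrow> 'x \<Rightarrow> 'c \<Rightarrow> 'x option \<Rightarrow> real" where
  "merged_dist p x y c u = (\<Sum>z\<in>{z. merge_map x y z = u}. p c z)"

definition MIL :: "('c::finite \<Rightarrow> 'x::finite \<Rightarrow> real) \<Rightarrow> 'x \<Rightarrow> 'x \<Rightarrow> real" where
  "MIL p x y = mutual_inf p - mutual_inf (merged_dist p x y)"

definition sech :: "real \<Rightarrow> real" where
  "sech t = 1 / cosh t"

definition rho :: "real \<Rightarrow> real" where
  "rho w = 2 * sech (pi * w) / (1 + 4 * w\<^sup>2)"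

definition wpt :: "real \<Rightarrow> nat \<Rightarrow> real" where
  "wpt \<Delta> j = (real j - 1/2) * \<Delta>"

text \<open>tau(u,w,j) in R^2, represented as a list of length 2.\<close>
definition tau :: "real \<Rightarrow> real \<Rightarrow> real \<Rightarrow> nat \<Rightarrow> real list" where
  "tau \<Delta> u w j =
     (if u = 0 then [0, 0]
      else [cos (w * ln u) * sqrt (2 * u * integral {(real j - 1) * \<Delta> .. real j * \<Delta>} rho),
            sin (w * ln u) * sqrt (2 * u * integral {(real j - 1) * \<Delta> .. real j * \<Delta>} rho)])"

text \<open>Concatenation is list append; the c-blocks are ordered by the enumeration of the finite type 'c.\<close>
definition eta1 :: "real \<Rightarrow> nat \<Rightarrow> ('c::enum \<Rightarrow> 'x \<Rightarrow> real) \<Rightarrow> 'x \<Rightarrow> real list" where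
  "eta1 \<Delta> J p x =
     concat (map (\<lambda>j. tau \<Delta> (\<Sum>c\<in>UNIV. p c x) (wpt \<Delta> j) j) [1..<J+1])
     @ concat (map (\<lambda>j. concat (map (\<lambda>c. tau \<Delta> (p c x) (wpt \<Delta> j) j) Enum.enum)) [1..<J+1])"

definition eta2 :: "real \<Rightarrow> nat \<Rightarrow> ('c::enum \<Rightarrow> 'x \<Rightarrow> real) \<Rightarrow> 'x \<Rightarrow> real list" where
  "eta2 \<Delta> J p x =
     concat (map (\<lambda>j. tau \<Delta> (\<Sum>c\<in>UNIV. p c x) (wpt \<Delta> j) j) [1..<J+1])
     @ concat (map (\<lambda>j. concat (map (\<lambda>c. map uminus (tau \<Delta> (p c x) (wpt \<Delta> j) j)) Enum.enum)) [1..<J+1])"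

definition list_inner :: "real list \<Rightarrow> real list \<Rightarrow> real" where
  "list_inner a b = sum_list (map2 (*) a b)"

end

theory Submission
  imports Defs "HOL-Complex_Analysis.Complex_Analysis" "HOL-Real_Asymp.Real_Asymp"
begin

text \<open>
  Put K(a,b) = (a+b) ln(a+b) - a ln a - b ln b. Merging x and y does not change the marginal of C,
  so MIL(x,y) = K(p(x),p(y)) - (SUM c. K(p(c,x),p(c,y))). For a, b > 0 the term K(a,b) is an integral,
  K(a,b) = 2 sqrt(ab) INT_0^oo rho(w) cos(w ln(a/b)) dw: this follows from the Fourier transform
  INT_0^oo sech(pi w) cos(t w) dw = 1/(2 cosh(t/2)), computed with the residue at i/2 on a rectangle,
  together with INT_0^oo e^(-s/2) cos(s w) ds = 2/(1+4w^2) and Fubini.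
  The features are built so that <tau(u,w_j,j), tau(v,w_j,j)> = 2 sqrt(uv) R_j cos(w_j ln(u/v)) with
  R_j the mass of rho on the j-th bin, and the sign flip in eta2 produces the difference of the two
  terms of MIL. Hence <eta1(x), eta2(y)> is the same expression with every integral replaced by a
  midpoint sum truncated at J Delta. Truncation costs (4/3) e^(-J Delta) and the midpoint rule
  (2/3) Delta |ln(a/b)|; as 2 sqrt(ab) <= a+b and sqrt(ab) |ln(a/b)| <= 2(a+b), every K-term is
  approximated to within (4/3)(a+b)(e^(-J Delta) + 2 Delta), and p(x) + p(y) <= 1 together with the
  choice of Delta and J turns the total into at most epsilon.
\<close>

lemma has_integral_real_derivative:
  assumes "a \<le> b" "\<And>x. x \<in> {a..b} \<Longrightarrow> (F has_real_derivative f x) (at x)"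
  shows "(f has_integral (F b - F a)) {a..b}"
  by (rule fundamental_theorem_of_calculus)
     (use assms in \<open>auto simp: has_real_derivative_iff_has_vector_derivative[symmetric]
                          intro: has_field_derivative_at_within\<close>)

lemma integral_symmetric_even:
  fixes f :: "real \<Rightarrow> real"
  assumes "N \<ge> 0" "continuous_on UNIV f" "\<And>x. f (- x) = f x"
  shows "integral {-N..N} f = 2 * integral {0..N} f"
proof -
  have int: "f integrable_on {a..b}" for a b
    using assms(2) by (intro integrable_continuous_interval) (rule continuous_on_subset, auto)
  hence "(f has_integral integral {0..N} f) {0..N}" by blast
  hence "((\<lambda>x. f (- x)) has_integral integral {0..N} f) {-N..-0}"
    using has_integral_reflect_real by blast
  hence "integral {-N..0} f = integral {0..N} f"
    using assms(3) by (simp add: integral_unique)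
  moreover have "integral {-N..N} f = integral {-N..0} f + integral {0..N} f"
    using Henstock_Kurzweil_Integration.integral_combine[of "-N" 0 N f] int assms(1) by simp
  ultimately show ?thesis by simp
qed

lemma sum_integral_bins:
  fixes f :: "real \<Rightarrow> real"
  assumes D: "\<Delta> \<ge> 0" and f: "continuous_on UNIV f"
  shows "(\<Sum>j=1..J. integral {(real j - 1) * \<Delta> .. real j * \<Delta>} f) = integral {0..real J * \<Delta>} f"
proof (induction J)
  case 0 thus ?case by simp
next
  case (Suc J)
  have int: "f integrable_on {0..real (Suc J) * \<Delta>}"
    using f by (intro integrable_continuous_interval) (rule continuous_on_subset, auto)
  have "integral {0..real (Suc J) * \<Delta>} f
      = integral {0..real J * \<Delta>} f + integral {real J * \<Delta>..real (Suc J) * \<Delta>} f"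
    using Henstock_Kurzweil_Integration.integral_combine[of 0 "real J * \<Delta>" "real (Suc J) * \<Delta>" f] int D
    by (simp add: mult_right_mono)
  thus ?case using Suc by simp
qed

lemma abs_cos_diff_le: "\<bar>cos u - cos v\<bar> \<le> \<bar>u - v::real\<bar>"
proof -
  have "\<bar>cos u - cos v\<bar> = 2 * \<bar>sin ((u + v) / 2)\<bar> * \<bar>sin ((v - u) / 2)\<bar>"
    by (simp add: cos_diff_cos abs_mult)
  also have "\<dots> \<le> 2 * 1 * \<bar>(v - u) / 2\<bar>"
    by (intro mult_mono abs_sin_x_le_abs_x) auto
  finally show ?thesis by simp
qed

lemma sqrt_mult_abs_ln_diff_le:
  assumes a: "a > 0" and b: "b > 0"
  shows "sqrt (a * b) * \<bar>ln a - ln b\<bar> \<le> 2 * (a + b)"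
proof -
  have main: "sqrt (u * v) * (ln u - ln v) \<le> 2 * u" if u: "u > 0" and v: "v > 0" and uv: "v \<le> u" for u v
  proof -
    define x where "x = sqrt u"
    define y where "y = sqrt v"
    have x: "x > 0" and y: "y > 0" using u v by (auto simp: x_def y_def)
    have yx: "y \<le> x" unfolding x_def y_def using uv by simp
    have lnu: "ln u - ln v = 2 * ln (x / y)"
      using u v x y by (simp add: x_def y_def ln_div ln_sqrt)
    have "ln (x / y) \<le> x / y - 1" using x y by (intro ln_le_minus_one) simp
    hence "x * y * ln (x / y) \<le> x * y * (x / y - 1)" using x y by (intro mult_left_mono) auto
    also have "\<dots> = x * (x - y)" using y by (simp add: field_simps)
    also have "\<dots> \<le> x * x" using x y by (simp add: mult_left_mono)
    finally have "x * y * ln (x / y) \<le> x * x" .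
    moreover have "sqrt (u * v) = x * y" unfolding x_def y_def by (simp add: real_sqrt_mult)
    moreover have "x * x = u" unfolding x_def using u by simp
    ultimately show ?thesis unfolding lnu by simp
  qed
  show ?thesis
  proof (cases "b \<le> a")
    case True
    have "ln b \<le> ln a" using True b by simp
    hence "\<bar>ln a - ln b\<bar> = ln a - ln b" by simp
    thus ?thesis using main[OF a b True] b by simp
  next
    case False
    have "ln a \<le> ln b" using False a by simp
    hence "\<bar>ln a - ln b\<bar> = ln b - ln a" by simp
    thus ?thesis using main[OF b a] False a by (simp add: mult.commute)
  qed
qed

lemma sech_altdef: "sech x = 2 / (exp x + exp (- x))"
  unfolding sech_def cosh_def by (simp add: divide_simps)

lemma sech_pos: "sech x > 0"
  unfolding sech_altdef by (simp add: add_pos_pos)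

lemma sech_minus: "sech (- x) = sech x"
  unfolding sech_def by simp

lemma sech_le_1: "sech x \<le> 1"
  unfolding sech_def using cosh_real_ge_1[of x] by simp

lemma sech_le_exp: "sech x \<le> 2 * exp (- x)"
proof -
  have "2 / (exp x + exp (- x)) \<le> 2 / exp x"
    by (rule divide_left_mono) (auto simp: add_pos_pos)
  thus ?thesis unfolding sech_altdef by (simp add: exp_minus field_simps)
qed

lemma continuous_on_sech [continuous_intros]:
  "continuous_on A f \<Longrightarrow> continuous_on A (\<lambda>x. sech (f x))"
  unfolding sech_def by (intro continuous_intros) simp_all

section \<open>Mutual information lost by merging two values\<close>

definition xlnx :: "real \<Rightarrow> real" where "xlnx t = t * ln t"

definition merge_loss :: "real \<Rightarrow> real \<Rightarrow> real" where "merge_loss a b = xlnx (a + b) - xlnx a - xlnx b"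

lemma xlnx_0 [simp]: "xlnx 0 = 0" unfolding xlnx_def by simp

lemma merge_loss_zero: "u = 0 \<or> v = 0 \<Longrightarrow> merge_loss u v = 0"
  unfolding merge_loss_def xlnx_def by auto

lemma mutual_inf_eq_xlnx:
  fixes q :: "'c::finite \<Rightarrow> 'u::finite \<Rightarrow> real"
  assumes nn: "\<And>c u. q c u \<ge> 0"
  shows "mutual_inf q = (\<Sum>u\<in>UNIV. \<Sum>c\<in>UNIV. xlnx (q c u))
           - (\<Sum>u\<in>UNIV. xlnx (marg_X q u)) - (\<Sum>c\<in>UNIV. xlnx (marg_C q c))"
proof -
  have tm: "(if q c u = 0 then 0 else q c u * ln (q c u / (marg_X q u * marg_C q c)))
      = xlnx (q c u) - q c u * ln (marg_X q u) - q c u * ln (marg_C q c)" for c u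
  proof (cases "q c u = 0")
    case True thus ?thesis by simp
  next
    case False
    hence qp: "q c u > 0" using nn[of c u] by simp
    have "q c u \<le> marg_X q u" unfolding marg_X_def by (rule member_le_sum) (use nn in auto)
    hence X: "marg_X q u > 0" using qp by simp
    have "q c u \<le> marg_C q c" unfolding marg_C_def by (rule member_le_sum) (use nn in auto)
    hence C: "marg_C q c > 0" using qp by simp
    have lneq: "ln (q c u / (marg_X q u * marg_C q c)) = ln (q c u) - ln (marg_X q u) - ln (marg_C q c)"
      using qp X C by (simp add: ln_div ln_mult)
    have "q c u * ln (q c u / (marg_X q u * marg_C q c)) = xlnx (q c u) - q c u * ln (marg_X q u) - q c u * ln (marg_C q c)"
      unfolding xlnx_def lneq by (simp add: right_diff_distrib)
    thus ?thesis using False by simp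
  qed
  have s1: "(\<Sum>u\<in>UNIV. \<Sum>c\<in>UNIV. q c u * ln (marg_X q u)) = (\<Sum>u\<in>UNIV. xlnx (marg_X q u))"
    unfolding xlnx_def marg_X_def by (simp add: sum_distrib_right)
  have s2: "(\<Sum>u\<in>UNIV. \<Sum>c\<in>UNIV. q c u * ln (marg_C q c)) = (\<Sum>c\<in>UNIV. xlnx (marg_C q c))"
    by (subst sum.swap) (simp add: xlnx_def marg_C_def sum_distrib_right)
  show ?thesis unfolding mutual_inf_def tm
    by (simp add: sum_subtractf s1 s2)
qed

text \<open>The image of \<open>h\<close> under \<^const>\<open>merge_map\<close>: the merged value \<^const>\<open>None\<close>
  carries \<open>h x + h y\<close>, and \<open>Some x\<close>, \<open>Some y\<close>, which have no preimage, carry \<open>0\<close>.\<close>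

definition merge_fun :: "('x \<Rightarrow> real) \<Rightarrow> 'x \<Rightarrow> 'x \<Rightarrow> 'x option \<Rightarrow> real" where
  "merge_fun h x y u = (case u of None \<Rightarrow> h x + h y | Some z \<Rightarrow> if z = x \<or> z = y then 0 else h z)"

lemma sum_merge_fun:
  fixes h :: "'x::finite \<Rightarrow> real" and \<phi> :: "real \<Rightarrow> real"
  assumes xy: "x \<noteq> y" and z: "\<phi> 0 = 0"
  shows "(\<Sum>z\<in>UNIV. \<phi> (h z)) - (\<Sum>u\<in>UNIV. \<phi> (merge_fun h x y u))
           = \<phi> (h x) + \<phi> (h y) - \<phi> (h x + h y)"
proof -
  have A: "(\<Sum>z\<in>UNIV. g z) = (\<Sum>z\<in>UNIV - {x,y}. g z) + g x + g y" for g :: "'x \<Rightarrow> real"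
  proof -
    have "(\<Sum>z\<in>UNIV. g z) = (\<Sum>z\<in>UNIV - {x,y}. g z) + (\<Sum>z\<in>{x,y}. g z)"
      by (rule sum.subset_diff) auto
    thus ?thesis using xy by simp
  qed
  have "(\<Sum>u\<in>UNIV. \<phi> (merge_fun h x y u))
      = \<phi> (merge_fun h x y None) + (\<Sum>u\<in>range Some. \<phi> (merge_fun h x y u))"
    by (simp add: UNIV_option_conv sum.insert)
  also have "(\<Sum>u\<in>range Some. \<phi> (merge_fun h x y u)) = (\<Sum>z\<in>UNIV. \<phi> (merge_fun h x y (Some z)))"
    by (subst sum.reindex) (auto simp: inj_on_def)
  also have "\<dots> = (\<Sum>z\<in>UNIV - {x,y}. \<phi> (h z))"
  proof -
    have "(\<Sum>z\<in>UNIV. \<phi> (merge_fun h x y (Some z)))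
        = (\<Sum>z\<in>UNIV - {x,y}. \<phi> (merge_fun h x y (Some z)))
          + \<phi> (merge_fun h x y (Some x)) + \<phi> (merge_fun h x y (Some y))"
      by (rule A)
    moreover have "(\<Sum>z\<in>UNIV - {x,y}. \<phi> (merge_fun h x y (Some z))) = (\<Sum>z\<in>UNIV - {x,y}. \<phi> (h z))"
      by (rule sum.cong) (auto simp: merge_fun_def)
    ultimately show ?thesis using z by (simp add: merge_fun_def)
  qed
  finally have B: "(\<Sum>u\<in>UNIV. \<phi> (merge_fun h x y u))
      = \<phi> (h x + h y) + (\<Sum>z\<in>UNIV - {x,y}. \<phi> (h z))"
    by (simp add: merge_fun_def)
  show ?thesis unfolding B A[of "\<lambda>z. \<phi> (h z)"] by simp
qed

lemma merged_dist_eq_merge_fun: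
  fixes p :: "'c \<Rightarrow> 'x::finite \<Rightarrow> real"
  assumes xy: "x \<noteq> y"
  shows "merged_dist p x y c = merge_fun (p c) x y"
proof
  fix u
  show "merged_dist p x y c u = merge_fun (p c) x y u"
  proof (cases u)
    case None
    have "{z. merge_map x y z = u} = {x, y}" using None by (auto simp: merge_map_def)
    thus ?thesis unfolding merged_dist_def merge_fun_def using None xy by simp
  next
    case (Some z0)
    have "{z. merge_map x y z = u} = (if z0 = x \<or> z0 = y then {} else {z0})"
      using Some by (auto simp: merge_map_def)
    thus ?thesis unfolding merged_dist_def merge_fun_def using Some by simp
  qed
qed

lemma marg_X_merged_dist:
  fixes p :: "'c::finite \<Rightarrow> 'x::finite \<Rightarrow> real"
  assumes xy: "x \<noteq> y"
  shows "marg_X (merged_dist p x y) = merge_fun (marg_X p) x y"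
proof
  fix u
  show "marg_X (merged_dist p x y) u = merge_fun (marg_X p) x y u"
    unfolding marg_X_def merged_dist_eq_merge_fun[OF xy] merge_fun_def
    by (cases u) (simp_all add: sum.distrib)
qed

lemma marg_C_merged_dist:
  fixes p :: "'c::finite \<Rightarrow> 'x::finite \<Rightarrow> real"
  assumes xy: "x \<noteq> y"
  shows "marg_C (merged_dist p x y) = marg_C p"
proof
  fix c
  have "(\<Sum>z\<in>UNIV. id (p c z)) - (\<Sum>u\<in>UNIV. id (merge_fun (p c) x y u))
      = id (p c x) + id (p c y) - id (p c x + p c y)"
    by (rule sum_merge_fun[OF xy]) simp
  thus "marg_C (merged_dist p x y) c = marg_C p c"
    unfolding marg_C_def merged_dist_eq_merge_fun[OF xy] by simp
qed

lemma MIL_eq_merge_loss: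
  fixes p :: "'c::finite \<Rightarrow> 'x::finite \<Rightarrow> real"
  assumes nn: "\<And>c x. p c x \<ge> 0" and xy: "x \<noteq> y"
  shows "MIL p x y = merge_loss (marg_X p x) (marg_X p y) - (\<Sum>c\<in>UNIV. merge_loss (p c x) (p c y))"
proof -
  have nnm: "merged_dist p x y c u \<ge> 0" for c u
    unfolding merged_dist_def by (rule sum_nonneg) (use nn in auto)
  have joint: "(\<Sum>z\<in>UNIV. xlnx (p c z)) - (\<Sum>u\<in>UNIV. xlnx (merged_dist p x y c u))
      = - merge_loss (p c x) (p c y)" for c
    unfolding merged_dist_eq_merge_fun[OF xy] using sum_merge_fun[OF xy, of xlnx "p c"]
    by (simp add: merge_loss_def)
  have marginal: "(\<Sum>z\<in>UNIV. xlnx (marg_X p z)) - (\<Sum>u\<in>UNIV. xlnx (marg_X (merged_dist p x y) u))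
      = - merge_loss (marg_X p x) (marg_X p y)"
    unfolding marg_X_merged_dist[OF xy] using sum_merge_fun[OF xy, of xlnx "marg_X p"]
    by (simp add: merge_loss_def)
  have "(\<Sum>c\<in>UNIV. \<Sum>z\<in>UNIV. xlnx (p c z)) - (\<Sum>c\<in>UNIV. \<Sum>u\<in>UNIV. xlnx (merged_dist p x y c u))
      = (\<Sum>c\<in>UNIV. - merge_loss (p c x) (p c y))"
    unfolding sum_subtractf[symmetric] using joint by simp
  moreover have "(\<Sum>z\<in>UNIV. \<Sum>c\<in>UNIV. xlnx (p c z)) = (\<Sum>c\<in>UNIV. \<Sum>z\<in>UNIV. xlnx (p c z))"
    and "(\<Sum>u\<in>UNIV. \<Sum>c\<in>UNIV. xlnx (merged_dist p x y c u))
      = (\<Sum>c\<in>UNIV. \<Sum>u\<in>UNIV. xlnx (merged_dist p x y c u))"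
    by (rule sum.swap)+
  ultimately show ?thesis
    unfolding MIL_def mutual_inf_eq_xlnx[OF nn] mutual_inf_eq_xlnx[OF nnm] marg_C_merged_dist[OF xy]
    using marginal by (simp add: sum_negf)
qed

section \<open>The Fourier transform of the hyperbolic secant\<close>

definition two_cosh_pi :: "complex \<Rightarrow> complex" where
  "two_cosh_pi z = exp (of_real pi * z) + exp (- (of_real pi * z))"

definition sech_kernel :: "real \<Rightarrow> complex \<Rightarrow> complex" where
  "sech_kernel t z = 2 * exp (\<i> * of_real t * z) / two_cosh_pi z"

definition strip :: "complex set" where
  "strip = {z. Im z > - 1/2} \<inter> {z. Im z < 3/2}"

lemma open_strip: "open strip"
  unfolding strip_def by (intro open_Int open_halfspace_Im_gt open_halfspace_Im_lt)

lemma connected_strip: "connected strip"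
  unfolding strip_def
  by (intro convex_connected convex_Int convex_halfspace_Im_gt convex_halfspace_Im_lt)

lemma two_cosh_pi_eq_0_in_strip:
  assumes "two_cosh_pi z = 0" "z \<in> strip"
  shows "z = \<i>/2"
proof -
  have e: "exp (of_real pi * z) = - exp (- (of_real pi * z))"
    using assms(1) unfolding two_cosh_pi_def by (simp add: add_eq_0_iff)
  have "exp (2 * of_real pi * z) = exp (of_real pi * z) * exp (of_real pi * z)"
    by (simp add: exp_add[symmetric] algebra_simps)
  also have "\<dots> = - (exp (- (of_real pi * z)) * exp (of_real pi * z))"
    using e by simp
  also have "\<dots> = exp (of_real pi * \<i>)" by (simp add: exp_add[symmetric])
  finally obtain n :: int
    where n: "2 * of_real pi * z = of_real pi * \<i> + complex_of_real (real_of_int (2 * n) * pi) * \<i>"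
    unfolding exp_eq by blast
  hence "pi * (2 * Im z) = pi * (1 + 2 * n)" and re: "Re z = 0"
    by (simp_all add: complex_eq_iff algebra_simps)
  hence "Im z = 1/2 + n" by simp
  moreover from this assms(2) have "n = 0" unfolding strip_def by simp
  ultimately show ?thesis using re by (simp add: complex_eq_iff)
qed

lemma sech_kernel_holomorphic: "sech_kernel t holomorphic_on (strip - {\<i>/2})"
  using two_cosh_pi_eq_0_in_strip unfolding sech_kernel_def two_cosh_pi_def
  by (intro holomorphic_intros) auto

lemma continuous_on_sech_kernel: "continuous_on (strip - {\<i>/2}) (sech_kernel t)"
  using sech_kernel_holomorphic holomorphic_on_imp_continuous_on by blast

lemma exp_pi_half_i: "exp (of_real pi * (\<i>/2)) = \<i>" "exp (- (of_real pi * (\<i>/2))) = - \<i>"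
proof -
  have "exp (of_real pi * (\<i>/2)) = cis (pi/2)" "exp (- (of_real pi * (\<i>/2))) = cis (- (pi/2))"
    by (simp_all add: cis_conv_exp mult_ac)
  thus "exp (of_real pi * (\<i>/2)) = \<i>" "exp (- (of_real pi * (\<i>/2))) = - \<i>"
    by (simp_all add: cis.ctr complex_eq_iff)
qed

lemma two_cosh_pi_half_i: "two_cosh_pi (\<i>/2) = 0"
  unfolding two_cosh_pi_def exp_pi_half_i by simp

lemma residue_sech_kernel:
  "residue (sech_kernel t) (\<i>/2) = exp (- of_real t / 2) / (of_real pi * \<i>)"
proof -
  let ?z0 = "\<i>/2" and ?d = "2 * of_real pi * \<i>"
  have "(two_cosh_pi has_field_derivative
          of_real pi * exp (of_real pi * ?z0) - of_real pi * exp (- (of_real pi * ?z0))) (at ?z0)"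
    unfolding two_cosh_pi_def by (auto intro!: derivative_eq_intros)
  hence "(two_cosh_pi has_field_derivative ?d) (at ?z0)"
    by (simp only: exp_pi_half_i) (simp add: mult_ac)
  hence "((\<lambda>w. two_cosh_pi w / (w - ?z0)) \<longlongrightarrow> ?d) (at ?z0)"
    by (simp add: has_field_derivative_iff two_cosh_pi_half_i)
  hence "((\<lambda>w. 2 * exp (\<i> * of_real t * w) * inverse (two_cosh_pi w / (w - ?z0)))
           \<longlongrightarrow> 2 * exp (\<i> * of_real t * ?z0) * inverse ?d) (at ?z0)"
    by (intro tendsto_intros) simp_all
  hence "((\<lambda>w. sech_kernel t w * (w - ?z0))
           \<longlongrightarrow> 2 * exp (\<i> * of_real t * ?z0) * inverse ?d) (at ?z0)"
    by (rule Lim_transform_eventually)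
      (auto simp: eventually_at_filter sech_kernel_def field_simps)
  hence "residue (sech_kernel t) ?z0 = 2 * exp (\<i> * of_real t * ?z0) * inverse ?d"
    by (intro residue_simple'[OF open_strip _ sech_kernel_holomorphic]) (auto simp: strip_def)
  also have "\<dots> = exp (- of_real t / 2) / (of_real pi * \<i>)"
    by (simp add: field_simps)
  finally show ?thesis .
qed

lemma contour_integral_sech_kernel_rectpath:
  assumes "N > 0"
  shows "contour_integral (rectpath (Complex (-N) 0) (Complex N 1)) (sech_kernel t)
           = 2 * exp (- of_real t / 2)"
proof -
  let ?g = "rectpath (Complex (-N) 0) (Complex N 1)"
  have box: "\<i>/2 \<in> box (Complex (-N) 0) (Complex N 1)"
    using assms by (auto simp: in_box_complex_iff)
  have pim: "path_image ?g = cbox (Complex (-N) 0) (Complex N 1) - box (Complex (-N) 0) (Complex N 1)"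
    using assms by (intro path_image_rectpath_cbox_minus_box) auto
  have sub: "path_image ?g \<subseteq> strip - {\<i>/2}"
    unfolding pim using box by (auto simp: in_cbox_complex_iff strip_def)
  have outside: "\<forall>z. z \<notin> strip \<longrightarrow> winding_number ?g z = 0"
  proof (intro allI impI)
    fix z assume "z \<notin> strip"
    hence "z \<notin> cbox (Complex (-N) 0) (Complex N 1)"
      by (auto simp: in_cbox_complex_iff strip_def)
    thus "winding_number ?g z = 0"
      using assms by (intro winding_number_rectpath_outside) auto
  qed
  have "contour_integral ?g (sech_kernel t)
          = 2 * pi * \<i> * (\<Sum>p\<in>{\<i>/2}. winding_number ?g p * residue (sech_kernel t) p)"
    by (rule Residue_theorem[OF open_strip connected_strip _ sech_kernel_holomorphic])
       (use sub outside in auto)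
  also have "\<dots> = 2 * pi * \<i> * residue (sech_kernel t) (\<i>/2)"
    using winding_number_rectpath[OF box] by simp
  also have "\<dots> = 2 * exp (- of_real t / 2)"
    by (simp add: residue_sech_kernel field_simps)
  finally show ?thesis .
qed

lemma sech_kernel_shift_i:
  "sech_kernel t (of_real x + \<i>) = - exp (- of_real t) * sech_kernel t (of_real x)"
proof -
  have num: "exp (\<i> * of_real t * (of_real x + \<i>)) = exp (\<i> * of_real t * of_real x) * exp (- of_real t)"
    by (simp add: exp_add[symmetric] algebra_simps)
  have "exp (of_real pi * (of_real x + \<i>)) = - exp (of_real pi * of_real x)"
    by (simp add: exp_add algebra_simps)
  moreover have "exp (- (of_real pi * (of_real x + \<i>)))
      = exp (- (of_real pi * of_real x)) * exp (- (of_real pi * \<i>))"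
    by (simp add: exp_add[symmetric] algebra_simps)
  moreover have "exp (- (of_real pi * \<i>)) = -1"
    by (simp add: exp_minus)
  ultimately have "two_cosh_pi (of_real x + \<i>) = - two_cosh_pi (of_real x)"
    unfolding two_cosh_pi_def by simp
  thus ?thesis unfolding sech_kernel_def num by (simp add: mult_ac)
qed

lemma contour_integral_rectpath_sides:
  assumes "N > 0"
  shows "contour_integral (rectpath (Complex (-N) 0) (Complex N 1)) (sech_kernel t) =
     integral {-N..N} (\<lambda>x. sech_kernel t (of_real x))
     + \<i> * integral {0..1} (\<lambda>y. sech_kernel t (Complex N y))
     - integral {-N..N} (\<lambda>x. sech_kernel t (of_real x + \<i>))
     - \<i> * integral {0..1} (\<lambda>y. sech_kernel t (Complex (-N) y))"
proof -
  define a1 where "a1 = Complex (-N) 0"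
  define a2 where "a2 = Complex N 0"
  define a3 where "a3 = Complex N 1"
  define a4 where "a4 = Complex (-N) 1"
  let ?f = "sech_kernel t"
  have rp: "rectpath a1 a3 = linepath a1 a2 +++ linepath a2 a3 +++ linepath a3 a4 +++ linepath a4 a1"
    by (simp add: rectpath_def Let_def a1_def a2_def a3_def a4_def)
  have box: "\<i>/2 \<in> box a1 a3"
    using assms by (auto simp: in_box_complex_iff a1_def a3_def)
  have pim: "path_image (rectpath a1 a3) = cbox a1 a3 - box a1 a3"
    using assms by (intro path_image_rectpath_cbox_minus_box) (auto simp: a1_def a3_def)
  have "path_image (rectpath a1 a3) \<subseteq> strip - {\<i>/2}"
    unfolding pim using box by (auto simp: in_cbox_complex_iff strip_def a1_def a3_def)
  moreover have "path_image (rectpath a1 a3) = closed_segment a1 a2 \<union> closed_segment a2 a3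
      \<union> closed_segment a3 a4 \<union> closed_segment a4 a1"
    unfolding rp by (simp add: path_image_join Un_assoc)
  ultimately have c: "continuous_on (closed_segment a1 a2) ?f" "continuous_on (closed_segment a2 a3) ?f"
      "continuous_on (closed_segment a3 a4) ?f" "continuous_on (closed_segment a4 a1) ?f"
    using continuous_on_subset[OF continuous_on_sech_kernel] by (metis Un_subset_iff)+
  have "contour_integral (rectpath a1 a3) ?f = contour_integral (linepath a1 a2) ?f
      + (contour_integral (linepath a2 a3) ?f
      + (contour_integral (linepath a3 a4) ?f + contour_integral (linepath a4 a1) ?f))"
    unfolding rp using c by (simp add: contour_integrable_continuous_linepath)
  also have "contour_integral (linepath a3 a4) ?f = - contour_integral (linepath a4 a3) ?f"
    using c(3) contour_integral_reverse_linepath by blast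
  also have "contour_integral (linepath a4 a1) ?f = - contour_integral (linepath a1 a4) ?f"
    using c(4) contour_integral_reverse_linepath by blast
  also have "contour_integral (linepath a1 a2) ?f = integral {-N..N} (\<lambda>x. ?f (of_real x))"
    using assms by (subst contour_integral_linepath_Reals_eq) (auto simp: a1_def a2_def complex_is_Real_iff)
  also have "contour_integral (linepath a2 a3) ?f = \<i> * integral {0..1} (\<lambda>y. ?f (Complex N y))"
    by (rule contour_integral_linepath_same_Re) (auto simp: a2_def a3_def)
  also have "contour_integral (linepath a1 a4) ?f = \<i> * integral {0..1} (\<lambda>y. ?f (Complex (-N) y))"
    by (rule contour_integral_linepath_same_Re) (auto simp: a1_def a4_def)
  also have "linepath a4 a3 = (+) \<i> \<circ> linepath (of_real (-N)) (of_real N)"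
    by (rule ext) (simp add: linepath_def complex_eq_iff a3_def a4_def algebra_simps)
  also have "contour_integral ((+) \<i> \<circ> linepath (of_real (-N)) (of_real N)) ?f
      = integral {-N..N} (\<lambda>x. ?f (of_real x + \<i>))"
    using assms by (simp add: contour_integral_translate contour_integral_linepath_Reals_eq add.commute)
  finally show ?thesis by (simp add: a1_def a3_def algebra_simps)
qed

lemma norm_two_cosh_pi_ge: "norm (two_cosh_pi (Complex c y)) \<ge> exp (pi * \<bar>c\<bar>) - exp (- (pi * \<bar>c\<bar>))"
proof -
  have "norm (exp (of_real pi * Complex c y)) = exp (pi * c)"
    and "norm (exp (- (of_real pi * Complex c y))) = exp (- (pi * c))"
    by simp_all
  thus ?thesis
    using norm_diff_ineq[of "exp (of_real pi * Complex c y)" "exp (- (of_real pi * Complex c y))"]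
          norm_diff_ineq[of "exp (- (of_real pi * Complex c y))" "exp (of_real pi * Complex c y)"]
    unfolding two_cosh_pi_def by (cases "c \<ge> 0") (simp_all add: add.commute)
qed

lemma norm_sech_kernel_vertical_le:
  assumes "\<bar>c\<bar> = N" "N > 0" "0 \<le> y" "y \<le> 1"
  shows "norm (sech_kernel t (Complex c y)) \<le> 2 * exp \<bar>t\<bar> / (exp (pi * N) - exp (- (pi * N)))"
proof -
  have "- (t * y) \<le> \<bar>t\<bar>"
    using assms(3,4) mult_right_le_one_le[of "\<bar>t\<bar>" y] abs_ge_minus_self[of "t * y"]
    by (simp add: abs_mult)
  hence "norm (2 * exp (\<i> * of_real t * Complex c y)) \<le> 2 * exp \<bar>t\<bar>"
    by (simp add: norm_mult)
  moreover have "norm (two_cosh_pi (Complex c y)) \<ge> exp (pi * N) - exp (- (pi * N))"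
    using norm_two_cosh_pi_ge[of c y] assms(1) by simp
  moreover have "exp (pi * N) - exp (- (pi * N)) > 0" using assms(2) by simp
  ultimately show ?thesis
    unfolding sech_kernel_def norm_divide by (intro frac_le) auto
qed

lemma sech_kernel_of_real: "sech_kernel t (of_real x) = of_real (sech (pi * x)) * cis (t * x)"
proof -
  have "two_cosh_pi (of_real x) = of_real (exp (pi * x) + exp (- (pi * x)))"
    unfolding two_cosh_pi_def by (simp add: exp_of_real[symmetric])
  moreover have "exp (\<i> * of_real t * of_real x) = cis (t * x)"
    by (simp add: cis_conv_exp mult_ac)
  ultimately show ?thesis unfolding sech_kernel_def sech_altdef by (simp add: field_simps)
qed

text \<open>Integrating the kernel around the rectangle with corners \<open>\<plusminus>N\<close>, \<open>\<plusminus>N + \<i>\<close>: the top side is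
  \<open>-e\<^sup>-\<^sup>t\<close> times the bottom side, the vertical sides are exponentially small, and the residue
  at \<open>\<i>/2\<close> gives \<open>2 e\<^sup>-\<^sup>t\<^sup>/\<^sup>2\<close>.\<close>

lemma sech_cos_integral_symmetric_estimate:
  assumes N: "N > 0"
  shows "\<bar>(1 + exp (- t)) * integral {-N..N} (\<lambda>x. sech (pi * x) * cos (t * x)) - 2 * exp (- t / 2)\<bar>
           \<le> 4 * exp \<bar>t\<bar> / (exp (pi * N) - exp (- (pi * N)))"
proof -
  define B where "B = integral {-N..N} (\<lambda>x. sech_kernel t (of_real x))"
  define R where "R = integral {0..1} (\<lambda>y. sech_kernel t (Complex N y))"
  define L where "L = integral {0..1} (\<lambda>y. sech_kernel t (Complex (-N) y))"
  define V where "V = 2 * exp \<bar>t\<bar> / (exp (pi * N) - exp (- (pi * N)))"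
  have "integral {-N..N} (\<lambda>x. sech_kernel t (of_real x + \<i>)) = - exp (- of_real t) * B"
    unfolding B_def sech_kernel_shift_i by simp
  hence "B + \<i> * R + exp (- of_real t) * B - \<i> * L = 2 * exp (- of_real t / 2)"
    using contour_integral_sech_kernel_rectpath[OF N, of t] contour_integral_rectpath_sides[OF N, of t]
    unfolding B_def[symmetric] R_def[symmetric] L_def[symmetric] by (simp add: algebra_simps)
  hence "Re (B + \<i> * R + exp (- of_real t) * B - \<i> * L) = Re (2 * exp (- of_real t / 2))"
    by simp
  moreover have "exp (- of_real t) = (of_real (exp (- t)) :: complex)"
    using exp_of_real[of "- t"] by simp
  moreover have "exp (- of_real t / 2) = (of_real (exp (- t / 2)) :: complex)"
  proof -
    have "- complex_of_real t / 2 = of_real (- t / 2)" by simp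
    thus ?thesis by (simp only: exp_of_real)
  qed
  ultimately have eqr: "(1 + exp (- t)) * Re B - 2 * exp (- t / 2) = Im R - Im L"
    by (simp add: algebra_simps)
  have "continuous_on {-N..N} (\<lambda>x. sech_kernel t (of_real x))"
    by (rule continuous_on_compose2[OF continuous_on_sech_kernel continuous_on_of_real])
       (auto simp: strip_def complex_eq_iff)
  hence "((\<lambda>x. sech_kernel t (of_real x)) has_integral B) {-N..N}"
    unfolding B_def using integrable_continuous_interval by blast
  hence "((\<lambda>x. sech (pi * x) * cos (t * x)) has_integral Re B) {-N..N}"
    using has_integral_Re[of "\<lambda>x. sech_kernel t (of_real x)"] by (simp add: sech_kernel_of_real)
  hence ReB: "integral {-N..N} (\<lambda>x. sech (pi * x) * cos (t * x)) = Re B"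
    by (rule integral_unique)
  have "norm (integral {0..1} (\<lambda>y. sech_kernel t (Complex c y))) \<le> V" if c: "\<bar>c\<bar> = N" for c
  proof -
    have "continuous_on {0..1} (\<lambda>y. sech_kernel t (Complex c y))"
      by (rule continuous_on_compose2[OF continuous_on_sech_kernel], intro continuous_intros)
         (use N c in \<open>auto simp: strip_def complex_eq_iff\<close>)
    hence "norm (integral {0..1} (\<lambda>y. sech_kernel t (Complex c y))) \<le> V * (1 - 0)"
      unfolding V_def by (intro integral_bound) (use norm_sech_kernel_vertical_le N c in auto)
    thus ?thesis by simp
  qed
  hence "norm R \<le> V" "norm L \<le> V" unfolding R_def L_def using N by auto
  hence "\<bar>Im R - Im L\<bar> \<le> 2 * V"
    using abs_Im_le_cmod[of R] abs_Im_le_cmod[of L] by linarith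
  thus ?thesis unfolding ReB eqr V_def by simp
qed

definition sech_cos_integral :: "real \<Rightarrow> real \<Rightarrow> real" where
  "sech_cos_integral N t = integral {0..N} (\<lambda>w. sech (pi * w) * cos (t * w))"

text \<open>The limit of \<^const>\<open>sech_cos_integral\<close> as \<open>N \<rightarrow> \<infinity>\<close>, namely
  \<open>sech (t/2) / 2\<close>.\<close>

definition sech_cos_transform :: "real \<Rightarrow> real" where
  "sech_cos_transform t = 1 / (exp (t/2) + exp (- t/2))"

lemma sech_cos_integral_estimate:
  assumes N: "N > 0"
  shows "\<bar>sech_cos_integral N t - sech_cos_transform t\<bar>
           \<le> 2 * exp \<bar>t\<bar> / (exp (pi * N) - exp (- (pi * N)))"
proof -
  define V where "V = 2 * exp \<bar>t\<bar> / (exp (pi * N) - exp (- (pi * N)))"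
  have "integral {-N..N} (\<lambda>x. sech (pi * x) * cos (t * x)) = 2 * sech_cos_integral N t"
    unfolding sech_cos_integral_def using N
    by (intro integral_symmetric_even continuous_intros) (auto simp: sech_minus)
  hence "\<bar>(1 + exp (- t)) * (2 * sech_cos_integral N t) - 2 * exp (- t / 2)\<bar> \<le> 2 * V"
    using sech_cos_integral_symmetric_estimate[OF N, of t] unfolding V_def by simp
  moreover have "(1 + exp (- t)) * sech_cos_transform t = exp (- t / 2)"
  proof -
    have "exp (- t/2) * (exp (t/2) + exp (- t/2)) = 1 + exp (- t)"
      by (simp add: distrib_left flip: exp_add)
    thus ?thesis unfolding sech_cos_transform_def
      by (metis add_pos_pos exp_gt_zero less_irrefl nonzero_eq_divide_eq times_divide_eq_right mult_1_right)
  qed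
  ultimately have "\<bar>(1 + exp (- t)) * (sech_cos_integral N t - sech_cos_transform t)\<bar> \<le> V"
    by (simp add: algebra_simps)
  hence "(1 + exp (- t)) * \<bar>sech_cos_integral N t - sech_cos_transform t\<bar> \<le> V"
    by (simp add: abs_mult add_pos_pos)
  moreover have "\<bar>sech_cos_integral N t - sech_cos_transform t\<bar>
      \<le> (1 + exp (- t)) * \<bar>sech_cos_integral N t - sech_cos_transform t\<bar>"
    by (simp add: algebra_simps)
  ultimately show ?thesis unfolding V_def by linarith
qed

lemma integral_sech_cos_tail_le:
  assumes "0 \<le> A" "A \<le> N"
  shows "\<bar>integral {A..N} (\<lambda>w. sech (pi * w) * cos (t * w))\<bar> \<le> 2 * exp (- A)"
proof -
  have "((\<lambda>w. - 2 * exp (- w)) has_real_derivative 2 * exp (- x)) (at x)" for x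
    by (auto intro!: derivative_eq_intros)
  from has_integral_real_derivative[OF assms(2) this]
  have exp_int: "((\<lambda>w. 2 * exp (- w)) has_integral (2 * exp (- A) - 2 * exp (- N))) {A..N}"
    by simp
  have "norm (integral {A..N} (\<lambda>w. sech (pi * w) * cos (t * w))) \<le> integral {A..N} (\<lambda>w. 2 * exp (- w))"
  proof (rule integral_norm_bound_integral)
    show "(\<lambda>w. sech (pi * w) * cos (t * w)) integrable_on {A..N}"
      by (intro integrable_continuous_interval continuous_intros)
    show "(\<lambda>w. 2 * exp (- w)) integrable_on {A..N}" using exp_int by blast
    fix w assume w: "w \<in> {A..N}"
    have "\<bar>sech (pi * w) * cos (t * w)\<bar> \<le> sech (pi * w)"
      using sech_pos[of "pi * w"] by (simp add: abs_mult mult_left_le)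
    also have "\<dots> \<le> 2 * exp (- (pi * w))" by (rule sech_le_exp)
    also have "\<dots> \<le> 2 * exp (- w)"
      using w assms pi_gt3 by (simp add: mult_le_cancel_right1)
    finally show "norm (sech (pi * w) * cos (t * w)) \<le> 2 * exp (- w)" by simp
  qed
  also have "\<dots> \<le> 2 * exp (- A)"
    using integral_unique[OF exp_int] by simp
  finally show ?thesis by simp
qed

lemma sech_cos_integral_approx:
  assumes N: "N > 0"
  shows "\<bar>sech_cos_integral N t - sech_cos_transform t\<bar> \<le> 2 * exp (- N)"
proof -
  have lim: "((\<lambda>M. 2 * exp (- N) + 2 * exp \<bar>t\<bar> / (exp (pi * M) - exp (- (pi * M))))
              \<longlongrightarrow> 2 * exp (- N)) at_top"
    by real_asymp
  have "\<forall>\<^sub>F M in at_top. \<bar>sech_cos_integral N t - sech_cos_transform t\<bar>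
          \<le> 2 * exp (- N) + 2 * exp \<bar>t\<bar> / (exp (pi * M) - exp (- (pi * M)))"
    using eventually_ge_at_top[of N]
  proof eventually_elim
    case (elim M)
    have "(\<lambda>w. sech (pi * w) * cos (t * w)) integrable_on {0..M}"
      by (intro integrable_continuous_interval continuous_intros)
    hence "sech_cos_integral M t = sech_cos_integral N t + integral {N..M} (\<lambda>w. sech (pi * w) * cos (t * w))"
      unfolding sech_cos_integral_def using elim N
      by (simp add: Henstock_Kurzweil_Integration.integral_combine)
    thus ?case
      using integral_sech_cos_tail_le[of N M t] sech_cos_integral_estimate[of M t] elim N by simp
  qed
  from tendsto_lowerbound[OF lim this] show ?thesis by simp
qed

section \<open>The cosine transform of \<^const>\<open>rho\<close>\<close>

lemma quadratic_pos: "1/4 + (w::real)^2 > 0" "1 + 4 * (w::real)^2 > 0"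
  by (simp_all add: add_pos_nonneg)

lemma quadratic_neq_0 [simp]: "1/4 + (w::real)^2 \<noteq> 0" "1 + 4 * (w::real)^2 \<noteq> 0"
  using quadratic_pos[of w] by linarith+

lemma continuous_on_rho [continuous_intros]: "continuous_on A f \<Longrightarrow> continuous_on A (\<lambda>x. rho (f x))"
  unfolding rho_def by (intro continuous_intros) auto

lemma rho_nonneg: "rho w \<ge> 0"
  unfolding rho_def using sech_pos[of "pi * w"] quadratic_pos[of w] by simp

lemma rho_le_exp: "w \<ge> 0 \<Longrightarrow> rho w \<le> 4 * exp (- (pi * w))"
proof -
  have q: "1 \<le> 1 + 4 * w^2" by simp
  have "rho w \<le> 2 * sech (pi * w) / 1"
    unfolding rho_def by (rule divide_left_mono) (use q sech_pos[of "pi * w"] quadratic_pos[of w] in auto)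
  also have "\<dots> \<le> 2 * (2 * exp (- (pi * w)))" using sech_le_exp[of "pi * w"] by simp
  finally show ?thesis by simp
qed

text \<open>The closed form of \<open>\<integral>\<^sub>0\<^sup>\<infinity> \<rho>(w) cos(L w) dw\<close>
  (see \<open>rho_cos_transform_approx\<close>).\<close>

definition rho_cos_transform :: "real \<Rightarrow> real" where
  "rho_cos_transform L =
     (exp (L/2) * (ln (exp (L/2) + exp (- L/2)) - L/2)
      + exp (- L/2) * (ln (exp (L/2) + exp (- L/2)) + L/2)) / 2"

definition rho_cos_primitive :: "real \<Rightarrow> real \<Rightarrow> real" where
  "rho_cos_primitive L s = - (exp (L/2) * ln (exp (L/2) + exp (- L/2) * exp (- s))
                              + exp (- L/2) * ln (exp (- L/2) + exp (L/2) * exp (- s)))"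

lemma sech_cos_transform_shift:
  "exp (- s/2) * sech_cos_transform (s + c) = exp (- s) / (exp (c/2) + exp (- c/2) * exp (- s))"
proof -
  define u where "u = exp (s/2)"
  have u: "u > 0" unfolding u_def by simp
  have e1: "exp (- s/2) = 1/u"
    using u unfolding u_def by (simp add: field_simps flip: exp_add)
  have e2: "exp (- s) = 1/(u*u)"
  proof -
    have "exp (- s) = exp (- s/2 + - s/2)" by simp
    also have "\<dots> = exp (- s/2) * exp (- s/2)" by (rule exp_add)
    finally show ?thesis using e1 by simp
  qed
  have e3: "exp ((s + c)/2) = u * exp (c/2)"
  proof -
    have "exp ((s + c)/2) = exp (s/2 + c/2)" by (simp add: add_divide_distrib)
    also have "\<dots> = exp (s/2) * exp (c/2)" by (rule exp_add)
    finally show ?thesis unfolding u_def .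
  qed
  have e4: "exp (- (s + c)/2) = exp (- c/2) / u"
  proof -
    have "exp (- (s + c)/2) = exp (- c/2 + - s/2)" by (simp add: add_divide_distrib)
    also have "\<dots> = exp (- c/2) * exp (- s/2)" by (rule exp_add)
    finally show ?thesis using e1 by simp
  qed
  have "exp (c/2) > 0" "exp (- c/2) > 0" by auto
  thus ?thesis unfolding sech_cos_transform_def e1 e2 e3 e4
    using u by (simp add: field_simps)
qed

lemma has_real_derivative_rho_cos_primitive:
  "(rho_cos_primitive L has_real_derivative
      exp (- s/2) * (sech_cos_transform (s + L) + sech_cos_transform (s - L))) (at s)"
proof -
  define A where "A = exp (L/2)"
  define B where "B = exp (- L/2)"
  have AB: "A * B = 1" unfolding A_def B_def by (simp flip: exp_add)
  have pos: "A + B * exp (- s) > 0" "B + A * exp (- s) > 0"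
    unfolding A_def B_def by (simp_all add: add_pos_pos)
  have "((\<lambda>s. ln (A + B * exp (- s))) has_real_derivative
          1 / (A + B * exp (- s)) * (B * (- exp (- s)))) (at s)"
    by (rule DERIV_chain2[OF DERIV_ln_divide]) (use pos in \<open>auto intro!: derivative_eq_intros\<close>)
  moreover have "((\<lambda>s. ln (B + A * exp (- s))) has_real_derivative
          1 / (B + A * exp (- s)) * (A * (- exp (- s)))) (at s)"
    by (rule DERIV_chain2[OF DERIV_ln_divide]) (use pos in \<open>auto intro!: derivative_eq_intros\<close>)
  ultimately have "(rho_cos_primitive L has_real_derivative
     - (A * (1 / (A + B * exp (- s)) * (B * (- exp (- s))))
        + B * (1 / (B + A * exp (- s)) * (A * (- exp (- s)))))) (at s)"
    unfolding rho_cos_primitive_def[abs_def] A_def[symmetric] B_def[symmetric]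
    by (intro DERIV_minus DERIV_add DERIV_cmult)
  moreover have "- (A * (1 / (A + B * exp (- s)) * (B * (- exp (- s))))
        + B * (1 / (B + A * exp (- s)) * (A * (- exp (- s)))))
     = exp (- s) / (A + B * exp (- s)) + exp (- s) / (B + A * exp (- s))"
  proof -
    have "- (A * (1 / (A + B * exp (- s)) * (B * (- exp (- s))))
        + B * (1 / (B + A * exp (- s)) * (A * (- exp (- s)))))
      = (A * B) * exp (- s) / (A + B * exp (- s)) + (A * B) * exp (- s) / (B + A * exp (- s))"
      by (simp add: algebra_simps)
    thus ?thesis unfolding AB by simp
  qed
  moreover have "exp (- s/2) * (sech_cos_transform (s + L) + sech_cos_transform (s - L))
     = exp (- s) / (A + B * exp (- s)) + exp (- s) / (B + A * exp (- s))"
    using sech_cos_transform_shift[of s L] sech_cos_transform_shift[of s "- L"]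
    unfolding A_def B_def by (simp add: distrib_left)
  ultimately show ?thesis by simp
qed

lemma rho_cos_primitive_tendsto:
  "((\<lambda>M. rho_cos_primitive L M - rho_cos_primitive L 0) \<longlongrightarrow> 2 * rho_cos_transform L) at_top"
proof -
  have "((\<lambda>M. rho_cos_primitive L M - rho_cos_primitive L 0) \<longlongrightarrow>
     - (exp (L/2) * ln (exp (L/2) + exp (- L/2) * 0) + exp (- L/2) * ln (exp (- L/2) + exp (L/2) * 0))
     - rho_cos_primitive L 0) at_top"
  proof -
    have "((\<lambda>M::real. exp (- M)) \<longlongrightarrow> 0) at_top" by real_asymp
    thus ?thesis unfolding rho_cos_primitive_def by (intro tendsto_intros) auto
  qed
  moreover have "- (exp (L/2) * ln (exp (L/2) + exp (- L/2) * 0) + exp (- L/2) * ln (exp (- L/2) + exp (L/2) * 0))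
     - rho_cos_primitive L 0 = 2 * rho_cos_transform L"
    unfolding rho_cos_primitive_def rho_cos_transform_def by (simp add: algebra_simps)
  ultimately show ?thesis by simp
qed

definition exp_cos_primitive :: "real \<Rightarrow> real \<Rightarrow> real" where
  "exp_cos_primitive w s = exp (- s/2) * (w * sin (s * w) - cos (s * w) / 2) / (1/4 + w^2)"

lemma has_real_derivative_exp_cos_primitive:
  "(exp_cos_primitive w has_real_derivative exp (- s/2) * cos (s * w)) (at s)"
proof -
  have "((\<lambda>s. exp (- s/2) * (w * sin (s * w) - cos (s * w) / 2)) has_real_derivative
          exp (- s/2) * cos (s * w) * (1/4 + w^2)) (at s)"
    by (auto intro!: derivative_eq_intros simp: field_simps power2_eq_square)
  from DERIV_cdivide[OF this, of "1/4 + w^2"] show ?thesis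
    unfolding exp_cos_primitive_def[abs_def] by simp
qed

lemma abs_exp_cos_primitive_le: "\<bar>exp_cos_primitive w M\<bar> \<le> 4 * exp (- M/2)"
proof -
  have p: "1/4 + w^2 > 0" by (rule quadratic_pos)
  have "\<bar>w * sin (M * w)\<bar> \<le> \<bar>w\<bar>" "\<bar>cos (M * w) / 2\<bar> \<le> 1/2"
    by (simp_all add: abs_mult mult_left_le)
  hence "\<bar>w * sin (M * w) - cos (M * w) / 2\<bar> \<le> \<bar>w\<bar> + 1/2"
    by linarith
  also have "\<dots> \<le> 4 * (1/4 + w^2)"
    using zero_le_power2[of "2 * \<bar>w\<bar> - 1/4"] by (simp add: power2_eq_square algebra_simps)
  finally have "\<bar>w * sin (M * w) - cos (M * w) / 2\<bar> / (1/4 + w^2) \<le> 4"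
    using p by (simp add: divide_le_eq)
  hence "exp (- M/2) * (\<bar>w * sin (M * w) - cos (M * w) / 2\<bar> / (1/4 + w^2)) \<le> exp (- M/2) * 4"
    by (intro mult_left_mono) simp_all
  thus ?thesis unfolding exp_cos_primitive_def using p by (simp add: abs_mult abs_divide)
qed

lemma continuous_on_exp_cos_primitive: "continuous_on A (\<lambda>w. exp_cos_primitive w M)"
  unfolding exp_cos_primitive_def by (intro continuous_intros) auto

text \<open>Since \<open>\<integral>\<^sub>0\<^sup>\<infinity> e\<^sup>-\<^sup>s\<^sup>/\<^sup>2 cos(s w) ds = 2/(1+4w\<^sup>2)\<close>, integrating this function over \<open>s\<close> gives
  \<open>2 \<rho>(w) cos(L w)\<close>, while integrating it over \<open>w\<close> gives, after the product-to-sum formula,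
  the transform of \<^const>\<open>sech\<close> at \<open>s \<plusminus> L\<close>.\<close>

definition rho_cos_double_integrand :: "real \<Rightarrow> real \<Rightarrow> real \<Rightarrow> real" where
  "rho_cos_double_integrand L s w = exp (- s/2) * sech (pi * w) * (2 * cos (s * w) * cos (L * w))"

lemma integral_rho_cos_double_integrand_w:
  "integral {0..N} (rho_cos_double_integrand L s)
     = exp (- s/2) * (sech_cos_integral N (s + L) + sech_cos_integral N (s - L))"
proof -
  have eq: "rho_cos_double_integrand L s w = exp (- s/2) *
      (sech (pi * w) * cos ((s + L) * w) + sech (pi * w) * cos ((s - L) * w))" for w
    unfolding rho_cos_double_integrand_def
    by (simp add: distrib_right left_diff_distrib cos_add cos_diff algebra_simps)
  have "(\<lambda>w. sech (pi * w) * cos (t * w)) integrable_on {0..N}" for t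
    by (intro integrable_continuous_interval continuous_intros)
  thus ?thesis unfolding eq integral_mult_right sech_cos_integral_def
    by (subst integral_add) simp_all
qed

lemma integral_rho_cos_double_integrand_s:
  assumes "0 \<le> M"
  shows "integral {0..M} (\<lambda>s. rho_cos_double_integrand L s w)
           = 2 * rho w * cos (L * w) + sech (pi * w) * (2 * cos (L * w)) * exp_cos_primitive w M"
proof -
  have "((\<lambda>s. exp (- s/2) * cos (s * w)) has_integral (exp_cos_primitive w M - exp_cos_primitive w 0)) {0..M}"
    by (rule has_integral_real_derivative[OF assms has_real_derivative_exp_cos_primitive])
  moreover have "exp_cos_primitive w 0 = - (2 / (1 + 4 * w^2))"
    unfolding exp_cos_primitive_def by (simp add: field_simps)
  ultimately have "integral {0..M} (\<lambda>s. exp (- s/2) * cos (s * w)) = exp_cos_primitive w M + 2 / (1 + 4 * w^2)"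
    by (simp add: integral_unique)
  moreover have "rho_cos_double_integrand L s w = sech (pi * w) * (2 * cos (L * w)) * (exp (- s/2) * cos (s * w))" for s
    unfolding rho_cos_double_integrand_def by (simp add: algebra_simps)
  hence "integral {0..M} (\<lambda>s. rho_cos_double_integrand L s w)
      = sech (pi * w) * (2 * cos (L * w)) * integral {0..M} (\<lambda>s. exp (- s/2) * cos (s * w))"
    by simp
  ultimately show ?thesis
    unfolding rho_def by (simp add: algebra_simps)
qed

lemma integral_swap_rho_cos_double_integrand:
  assumes "0 \<le> M"
  shows "integral {0..M} (\<lambda>s. integral {0..N} (rho_cos_double_integrand L s))
     = 2 * integral {0..N} (\<lambda>w. rho w * cos (L * w))
       + integral {0..N} (\<lambda>w. sech (pi * w) * (2 * cos (L * w)) * exp_cos_primitive w M)"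
proof -
  have "continuous_on (cbox (0,0) (M,N)) (\<lambda>(s,w). rho_cos_double_integrand L s w)"
    unfolding rho_cos_double_integrand_def case_prod_beta by (intro continuous_intros) simp
  from integral_swap_continuous[OF this]
  have "integral {0..M} (\<lambda>s. integral {0..N} (rho_cos_double_integrand L s))
      = integral {0..N} (\<lambda>w. integral {0..M} (\<lambda>s. rho_cos_double_integrand L s w))"
    by (simp add: cbox_interval)
  also have "\<dots> = integral {0..N} (\<lambda>w. 2 * (rho w * cos (L * w))
                   + sech (pi * w) * (2 * cos (L * w)) * exp_cos_primitive w M)"
    using integral_rho_cos_double_integrand_s[OF assms] by (simp add: mult.assoc)
  also have "\<dots> = 2 * integral {0..N} (\<lambda>w. rho w * cos (L * w))
       + integral {0..N} (\<lambda>w. sech (pi * w) * (2 * cos (L * w)) * exp_cos_primitive w M)"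
  proof -
    have "(\<lambda>w. 2 * (rho w * cos (L * w))) integrable_on {0..N}"
      by (intro integrable_continuous_interval continuous_intros)
    moreover have "(\<lambda>w. sech (pi * w) * (2 * cos (L * w)) * exp_cos_primitive w M) integrable_on {0..N}"
      by (intro integrable_continuous_interval continuous_intros continuous_on_exp_cos_primitive)
    ultimately show ?thesis by (simp add: integral_add)
  qed
  finally show ?thesis .
qed

lemma abs_integral_sech_exp_cos_primitive_le:
  assumes "N \<ge> 0"
  shows "\<bar>integral {0..N} (\<lambda>w. sech (pi * w) * (2 * cos (L * w)) * exp_cos_primitive w M)\<bar>
           \<le> 8 * N * exp (- M/2)"
proof -
  have "norm (integral {0..N} (\<lambda>w. sech (pi * w) * (2 * cos (L * w)) * exp_cos_primitive w M))
          \<le> 8 * exp (- M/2) * (N - 0)"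
  proof (rule integral_bound)
    show "continuous_on {0..N} (\<lambda>w. sech (pi * w) * (2 * cos (L * w)) * exp_cos_primitive w M)"
      by (intro continuous_intros continuous_on_exp_cos_primitive)
    fix w
    have "\<bar>sech (pi * w)\<bar> * \<bar>2 * cos (L * w)\<bar> * \<bar>exp_cos_primitive w M\<bar>
            \<le> 1 * 2 * (4 * exp (- M/2))"
      using sech_le_1[of "pi * w"] sech_pos[of "pi * w"] abs_exp_cos_primitive_le[of w M]
      by (intro mult_mono) (auto simp: abs_mult)
    thus "norm (sech (pi * w) * (2 * cos (L * w)) * exp_cos_primitive w M) \<le> 8 * exp (- M/2)"
      by (simp add: abs_mult)
  qed (use assms in simp)
  thus ?thesis by (simp add: mult_ac)
qed

lemma integral_exp_half_sech_cos_approx: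
  assumes N: "N > 0" and M: "M \<ge> 0"
  shows "\<bar>integral {0..M} (\<lambda>s. integral {0..N} (rho_cos_double_integrand L s))
           - (rho_cos_primitive L M - rho_cos_primitive L 0)\<bar> \<le> 8 * exp (- N)"
proof -
  define P where "P = (\<lambda>s. integral {0..N} (rho_cos_double_integrand L s))"
  define h where "h = (\<lambda>s. exp (- s/2) * (sech_cos_transform (s + L) + sech_cos_transform (s - L)))"
  have h: "(h has_integral (rho_cos_primitive L M - rho_cos_primitive L 0)) {0..M}"
    unfolding h_def by (rule has_integral_real_derivative[OF M has_real_derivative_rho_cos_primitive])
  have "continuous_on (cbox (0,0) (M,N)) (\<lambda>(s,w). rho_cos_double_integrand L s w)"
    unfolding rho_cos_double_integrand_def case_prod_beta by (intro continuous_intros) simp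
  hence P_int: "P integrable_on {0..M}"
    using integral_integrable_2dim unfolding P_def by (fastforce simp: cbox_interval)
  have "((\<lambda>s. - 2 * exp (- s/2)) has_real_derivative exp (- s/2)) (at s)" for s
    by (auto intro!: derivative_eq_intros)
  from has_integral_real_derivative[OF M this]
  have exp_int: "((\<lambda>s. exp (- s/2)) has_integral (2 - 2 * exp (- M/2))) {0..M}"
    by simp
  have "norm (integral {0..M} (\<lambda>s. P s - h s)) \<le> integral {0..M} (\<lambda>s. 4 * exp (- N) * exp (- s/2))"
  proof (rule integral_norm_bound_integral)
    show "(\<lambda>s. P s - h s) integrable_on {0..M}"
      using P_int h by (intro integrable_diff) blast+
    show "(\<lambda>s. 4 * exp (- N) * exp (- s/2)) integrable_on {0..M}"
      by (intro integrable_continuous_interval continuous_intros) simp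
    fix s
    have "P s - h s = exp (- s/2) * ((sech_cos_integral N (s + L) - sech_cos_transform (s + L))
                                   + (sech_cos_integral N (s - L) - sech_cos_transform (s - L)))"
      unfolding P_def h_def integral_rho_cos_double_integrand_w by (simp add: algebra_simps)
    moreover have "\<bar>(sech_cos_integral N (s + L) - sech_cos_transform (s + L))
                   + (sech_cos_integral N (s - L) - sech_cos_transform (s - L))\<bar> \<le> 4 * exp (- N)"
      using sech_cos_integral_approx[OF N, of "s + L"] sech_cos_integral_approx[OF N, of "s - L"]
      by linarith
    ultimately show "norm (P s - h s) \<le> 4 * exp (- N) * exp (- s/2)"
      by (simp add: abs_mult mult.commute)
  qed
  also have "\<dots> = 4 * exp (- N) * (2 - 2 * exp (- M/2))"
    using integral_unique[OF exp_int] by simp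
  also have "\<dots> \<le> 8 * exp (- N)"
    by (simp add: algebra_simps)
  finally show ?thesis
    using integral_diff[OF P_int has_integral_integrable[OF h]] integral_unique[OF h]
    unfolding P_def by simp
qed

lemma rho_cos_primitive_approx:
  assumes N: "N > 0" and M: "M \<ge> 0"
  shows "\<bar>(rho_cos_primitive L M - rho_cos_primitive L 0) - 2 * integral {0..N} (\<lambda>w. rho w * cos (L * w))\<bar>
           \<le> 8 * exp (- N) + 8 * N * exp (- M/2)"
  using integral_swap_rho_cos_double_integrand[OF M, of N L]
        integral_exp_half_sech_cos_approx[OF N M, of L]
        abs_integral_sech_exp_cos_primitive_le[of N L M] N
  by linarith

lemma rho_cos_transform_approx:
  assumes N: "N > 0"
  shows "\<bar>rho_cos_transform L - integral {0..N} (\<lambda>w. rho w * cos (L * w))\<bar> \<le> 4 * exp (- N)"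
proof -
  define X where "X = integral {0..N} (\<lambda>w. rho w * cos (L * w))"
  have "((\<lambda>M. \<bar>(rho_cos_primitive L M - rho_cos_primitive L 0) - 2 * X\<bar>)
          \<longlongrightarrow> \<bar>2 * rho_cos_transform L - 2 * X\<bar>) at_top"
    by (intro tendsto_intros rho_cos_primitive_tendsto)
  moreover have "((\<lambda>M. 8 * exp (- N) + 8 * N * exp (- M/2)) \<longlongrightarrow> 8 * exp (- N)) at_top"
    by real_asymp
  moreover have "\<forall>\<^sub>F M in at_top. \<bar>(rho_cos_primitive L M - rho_cos_primitive L 0) - 2 * X\<bar>
                    \<le> 8 * exp (- N) + 8 * N * exp (- M/2)"
    using eventually_ge_at_top[of 0] unfolding X_def by eventually_elim (rule rho_cos_primitive_approx[OF N])
  ultimately have "\<bar>2 * rho_cos_transform L - 2 * X\<bar> \<le> 8 * exp (- N)"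
    by (intro tendsto_le[of at_top]) simp_all
  thus ?thesis unfolding X_def by simp
qed

lemma has_integral_exp_pi:
  fixes A N :: real assumes "A \<le> N"
  shows "((\<lambda>w. 4 * exp (- (pi * w))) has_integral (4/pi * exp (- (pi * A)) - 4/pi * exp (- (pi * N)))) {A..N}"
proof -
  have "((\<lambda>w. 4 * exp (- (pi * w))) has_integral
          ((\<lambda>w. - (4/pi) * exp (- (pi * w))) N - (\<lambda>w. - (4/pi) * exp (- (pi * w))) A)) {A..N}"
    by (rule has_integral_real_derivative[OF assms]) (auto intro!: derivative_eq_intros)
  thus ?thesis by simp
qed

lemma integral_rho_le:
  assumes "A \<ge> 0" shows "integral {0..A} rho \<le> 4/3"
proof -
  have "integral {0..A} rho \<le> integral {0..A} (\<lambda>w. 4 * exp (- (pi * w)))"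
    by (rule integral_le)
       (use has_integral_exp_pi[OF assms] rho_le_exp
         in \<open>auto intro: integrable_continuous_interval continuous_on_rho[OF continuous_on_id]\<close>)
  also have "\<dots> = 4/pi * exp (- (pi * 0)) - 4/pi * exp (- (pi * A))"
    using has_integral_exp_pi[OF assms] by (rule integral_unique)
  also have "\<dots> \<le> 4/pi" by simp
  also have "\<dots> \<le> 4/3" by (rule divide_left_mono) (use pi_gt3 in auto)
  finally show ?thesis .
qed

lemma integral_rho_cos_tail_le:
  assumes "0 \<le> A" "A \<le> N"
  shows "\<bar>integral {0..N} (\<lambda>w. rho w * cos (L * w)) - integral {0..A} (\<lambda>w. rho w * cos (L * w))\<bar>
           \<le> 4/3 * exp (- A)"
proof -
  let ?f = "\<lambda>w. rho w * cos (L * w)"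
  have int: "?f integrable_on {0..N}"
    by (intro integrable_continuous_interval continuous_intros continuous_on_rho[OF continuous_on_id])
  have "integral {0..N} ?f = integral {0..A} ?f + integral {A..N} ?f"
    using Henstock_Kurzweil_Integration.integral_combine[of 0 A N ?f] int assms by simp
  moreover have "norm (integral {A..N} ?f) \<le> integral {A..N} (\<lambda>w. 4 * exp (- (pi * w)))"
  proof (rule integral_norm_bound_integral)
    show "?f integrable_on {A..N}"
      by (intro integrable_continuous_interval continuous_intros continuous_on_rho[OF continuous_on_id])
    show "(\<lambda>w. 4 * exp (- (pi * w))) integrable_on {A..N}" using has_integral_exp_pi[OF assms(2)] by blast
    fix w assume w: "w \<in> {A..N}"
    have "\<bar>rho w * cos (L * w)\<bar> \<le> rho w" using rho_nonneg[of w] by (simp add: abs_mult mult_left_le)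
    also have "\<dots> \<le> 4 * exp (- (pi * w))" using w assms by (intro rho_le_exp) simp
    finally show "norm (?f w) \<le> 4 * exp (- (pi * w))" by simp
  qed
  moreover have "integral {A..N} (\<lambda>w. 4 * exp (- (pi * w))) = 4/pi * exp (- (pi * A)) - 4/pi * exp (- (pi * N))"
    using has_integral_exp_pi[OF assms(2)] by (rule integral_unique)
  moreover have "4/pi * exp (- (pi * A)) \<le> 4/3 * exp (- A)"
  proof (rule mult_mono)
    show "4 / pi \<le> 4 / 3" by (rule divide_left_mono) (use pi_gt3 in auto)
    have "A \<le> pi * A" using assms(1) pi_gt3 by (simp add: mult_le_cancel_right1)
    thus "exp (- (pi * A)) \<le> exp (- A)" by simp
  qed auto
  moreover have "4/pi * exp (- (pi * N)) \<ge> 0" by simp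
  ultimately show ?thesis by (simp only: real_norm_def; linarith)
qed

lemma rho_cos_transform_tail:
  assumes A: "A \<ge> 0"
  shows "\<bar>rho_cos_transform L - integral {0..A} (\<lambda>w. rho w * cos (L * w))\<bar> \<le> 4/3 * exp (- A)"
proof -
  have lim: "((\<lambda>N. 4/3 * exp (- A) + 4 * exp (- N)) \<longlongrightarrow> 4/3 * exp (- A)) at_top"
    by real_asymp
  have ev: "\<forall>\<^sub>F N in at_top. \<bar>rho_cos_transform L - integral {0..A} (\<lambda>w. rho w * cos (L * w))\<bar>
              \<le> 4/3 * exp (- A) + 4 * exp (- N)"
    using eventually_ge_at_top[of "max A 1"]
  proof eventually_elim
    case (elim N)
    have "\<bar>rho_cos_transform L - integral {0..N} (\<lambda>w. rho w * cos (L * w))\<bar> \<le> 4 * exp (- N)"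
      using elim by (intro rho_cos_transform_approx) simp
    moreover have "\<bar>integral {0..N} (\<lambda>w. rho w * cos (L * w))
                      - integral {0..A} (\<lambda>w. rho w * cos (L * w))\<bar> \<le> 4/3 * exp (- A)"
      using elim A by (intro integral_rho_cos_tail_le) auto
    ultimately show ?case by linarith
  qed
  from tendsto_lowerbound[OF lim ev] show ?thesis by simp
qed

section \<open>The merge loss as a cosine transform\<close>

lemma merge_loss_eq_rho_cos_transform:
  assumes a: "a > 0" and b: "b > 0"
  shows "2 * sqrt (a * b) * rho_cos_transform (ln a - ln b) = merge_loss a b"
proof -
  define x where "x = sqrt a"
  define y where "y = sqrt b"
  have x: "x > 0" and y: "y > 0" using a b by (auto simp: x_def y_def)
  have ax: "a = x^2" and by': "b = y^2" using a b by (auto simp: x_def y_def)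
  have lna: "ln a = 2 * ln x" unfolding ax using x by (simp add: ln_realpow)
  have lnb: "ln b = 2 * ln y" unfolding by' using y by (simp add: ln_realpow)
  define L where "L = ln a - ln b"
  have hL: "L/2 = ln x - ln y" unfolding L_def lna lnb by simp
  have e1: "exp (L/2) = x / y" unfolding hL using x y by (simp add: exp_diff)
  have e2: "exp (- (L/2)) = y / x" unfolding hL using x y by (simp add: exp_diff)
  have s: "x / y + y / x = (x^2 + y^2) / (x * y)" using x y by (simp add: field_simps power2_eq_square)
  have e3: "ln (x / y + y / x) = ln (x^2 + y^2) - ln x - ln y"
    unfolding s using x y by (simp add: ln_div ln_mult add_pos_pos)
  have sab: "sqrt (a * b) = x * y" unfolding x_def y_def by (simp add: real_sqrt_mult)
  have e2': "exp (- L/2) = y / x" using e2 by simp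
  have P: "rho_cos_transform L = ((x / y) * (ln (x / y + y / x) - (ln x - ln y))
                                  + (y / x) * (ln (x / y + y / x) + (ln x - ln y))) / 2"
    unfolding rho_cos_transform_def e1 e2' unfolding hL ..
  have "2 * sqrt (a * b) * rho_cos_transform L = x * y * ((x / y) * (ln (x^2 + y^2) - ln x - ln y - (ln x - ln y))
       + (y / x) * (ln (x^2 + y^2) - ln x - ln y + (ln x - ln y)))"
    unfolding P sab e3 by simp
  also have "\<dots> = x^2 * (ln (x^2 + y^2) - 2 * ln x) + y^2 * (ln (x^2 + y^2) - 2 * ln y)"
    using x y by (simp add: field_simps power2_eq_square)
  also have "\<dots> = merge_loss a b"
    unfolding merge_loss_def xlnx_def ax by' using x y by (simp add: ln_realpow algebra_simps)
  finally show ?thesis unfolding L_def .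
qed

section \<open>Discretization\<close>

definition rho_bin :: "real \<Rightarrow> nat \<Rightarrow> real" where
  "rho_bin \<Delta> j = integral {(real j - 1) * \<Delta> .. real j * \<Delta>} rho"

definition rho_cos_sum :: "real \<Rightarrow> nat \<Rightarrow> real \<Rightarrow> real" where
  "rho_cos_sum \<Delta> J L = (\<Sum>j=1..J. rho_bin \<Delta> j * cos (wpt \<Delta> j * L))"

lemma rho_bin_nonneg: "\<Delta> \<ge> 0 \<Longrightarrow> rho_bin \<Delta> j \<ge> 0"
  unfolding rho_bin_def
  by (rule integral_nonneg) (auto intro: integrable_continuous_interval continuous_on_rho[OF continuous_on_id] rho_nonneg)

lemma abs_diff_wpt_le:
  assumes "w \<in> {(real j - 1) * \<Delta> .. real j * \<Delta>}"
  shows "\<bar>w - wpt \<Delta> j\<bar> \<le> \<Delta>/2"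
proof -
  have "real j * \<Delta> - \<Delta> \<le> w" "w \<le> real j * \<Delta>"
    using assms by (auto simp: algebra_simps)
  moreover have "wpt \<Delta> j = real j * \<Delta> - \<Delta>/2"
    unfolding wpt_def by (simp add: algebra_simps)
  ultimately show ?thesis by (simp only: abs_le_iff) linarith
qed

lemma abs_integral_bin_rho_cos_le:
  assumes "\<Delta> \<ge> 0"
  shows "\<bar>integral {(real j - 1) * \<Delta> .. real j * \<Delta>} (\<lambda>w. rho w * cos (L * w))
           - rho_bin \<Delta> j * cos (wpt \<Delta> j * L)\<bar> \<le> rho_bin \<Delta> j * (\<Delta>/2 * \<bar>L\<bar>)"
proof -
  let ?I = "{(real j - 1) * \<Delta> .. real j * \<Delta>}"
  have int: "(\<lambda>w. rho w * f w) integrable_on ?I" if "continuous_on UNIV f" for f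
    using that by (intro integrable_continuous_interval continuous_intros continuous_on_rho[OF continuous_on_id])
      (auto intro: continuous_on_subset)
  have "integral ?I (\<lambda>w. rho w * cos (L * w)) - rho_bin \<Delta> j * cos (wpt \<Delta> j * L)
      = integral ?I (\<lambda>w. rho w * (cos (L * w) - cos (wpt \<Delta> j * L)))"
    unfolding rho_bin_def right_diff_distrib
    by (subst integral_diff) (auto intro!: int continuous_intros)
  also have "norm \<dots> \<le> integral ?I (\<lambda>w. rho w * (\<Delta>/2 * \<bar>L\<bar>))"
  proof (rule integral_norm_bound_integral)
    fix w assume "w \<in> ?I"
    hence "\<bar>L\<bar> * \<bar>w - wpt \<Delta> j\<bar> \<le> \<bar>L\<bar> * (\<Delta>/2)"
      using abs_diff_wpt_le[of w j \<Delta>] by (intro mult_left_mono) auto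
    moreover have "\<bar>L * w - wpt \<Delta> j * L\<bar> = \<bar>L\<bar> * \<bar>w - wpt \<Delta> j\<bar>"
      by (simp add: abs_mult[symmetric] algebra_simps)
    ultimately have "\<bar>L * w - wpt \<Delta> j * L\<bar> \<le> \<bar>L\<bar> * (\<Delta>/2)" by simp
    hence "\<bar>cos (L * w) - cos (wpt \<Delta> j * L)\<bar> \<le> \<Delta>/2 * \<bar>L\<bar>"
      using abs_cos_diff_le[of "L * w" "wpt \<Delta> j * L"] by (simp add: mult.commute)
    hence "rho w * \<bar>cos (L * w) - cos (wpt \<Delta> j * L)\<bar> \<le> rho w * (\<Delta>/2 * \<bar>L\<bar>)"
      using rho_nonneg[of w] by (rule mult_left_mono)
    thus "norm (rho w * (cos (L * w) - cos (wpt \<Delta> j * L))) \<le> rho w * (\<Delta>/2 * \<bar>L\<bar>)"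
      using rho_nonneg[of w] by (simp add: abs_mult)
  qed (auto intro!: int continuous_intros)
  also have "\<dots> = rho_bin \<Delta> j * (\<Delta>/2 * \<bar>L\<bar>)"
    unfolding rho_bin_def by simp
  finally show ?thesis by simp
qed

lemma rho_cos_sum_approx:
  assumes "\<Delta> > 0"
  shows "\<bar>integral {0..real J * \<Delta>} (\<lambda>w. rho w * cos (L * w)) - rho_cos_sum \<Delta> J L\<bar>
           \<le> 2/3 * \<Delta> * \<bar>L\<bar>"
proof -
  have "integral {0..real J * \<Delta>} (\<lambda>w. rho w * cos (L * w)) - rho_cos_sum \<Delta> J L
      = (\<Sum>j=1..J. integral {(real j - 1) * \<Delta> .. real j * \<Delta>} (\<lambda>w. rho w * cos (L * w))
                    - rho_bin \<Delta> j * cos (wpt \<Delta> j * L))"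
    unfolding rho_cos_sum_def sum_subtractf using assms
    by (subst sum_integral_bins) (auto intro!: continuous_intros continuous_on_rho[OF continuous_on_id])
  also have "\<bar>\<dots>\<bar> \<le> (\<Sum>j=1..J. rho_bin \<Delta> j * (\<Delta>/2 * \<bar>L\<bar>))"
    using assms by (intro order_trans[OF sum_abs sum_mono] abs_integral_bin_rho_cos_le) simp
  also have "\<dots> = integral {0..real J * \<Delta>} rho * (\<Delta>/2 * \<bar>L\<bar>)"
    unfolding rho_bin_def sum_distrib_right[symmetric] using assms
    by (subst sum_integral_bins) (auto intro: continuous_on_rho[OF continuous_on_id])
  also have "\<dots> \<le> 4/3 * (\<Delta>/2 * \<bar>L\<bar>)"
    using integral_rho_le[of "real J * \<Delta>"] assms by (intro mult_right_mono) auto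
  finally show ?thesis by simp
qed

lemma merge_loss_rho_cos_sum_approx:
  assumes a: "a > 0" and b: "b > 0" and D: "\<Delta> > 0"
  shows "\<bar>merge_loss a b - 2 * sqrt (a * b) * rho_cos_sum \<Delta> J (ln a - ln b)\<bar>
           \<le> (a + b) * (4/3 * (exp (- (real J * \<Delta>)) + 2 * \<Delta>))"
proof -
  define L where "L = ln a - ln b"
  define A where "A = real J * \<Delta>"
  have A: "A \<ge> 0" unfolding A_def using D by simp
  have "\<bar>rho_cos_transform L - rho_cos_sum \<Delta> J L\<bar>
      \<le> \<bar>rho_cos_transform L - integral {0..A} (\<lambda>w. rho w * cos (L * w))\<bar>
        + \<bar>integral {0..A} (\<lambda>w. rho w * cos (L * w)) - rho_cos_sum \<Delta> J L\<bar>"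
    by linarith
  also have "\<dots> \<le> 4/3 * exp (- A) + 2/3 * \<Delta> * \<bar>L\<bar>"
    using rho_cos_transform_tail[OF A, of L] rho_cos_sum_approx[OF D, of J L] unfolding A_def by linarith
  finally have p: "\<bar>rho_cos_transform L - rho_cos_sum \<Delta> J L\<bar>
      \<le> 4/3 * exp (- A) + 2/3 * \<Delta> * \<bar>L\<bar>" .
  have s0: "sqrt (a * b) \<ge> 0" using a b by simp
  have e: "merge_loss a b - 2 * sqrt (a * b) * rho_cos_sum \<Delta> J L
      = 2 * sqrt (a * b) * (rho_cos_transform L - rho_cos_sum \<Delta> J L)"
    unfolding merge_loss_eq_rho_cos_transform[OF a b, symmetric] L_def by (simp add: right_diff_distrib)
  have "\<bar>merge_loss a b - 2 * sqrt (a * b) * rho_cos_sum \<Delta> J L\<bar>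
      = 2 * sqrt (a * b) * \<bar>rho_cos_transform L - rho_cos_sum \<Delta> J L\<bar>"
    unfolding e using s0 by (simp add: abs_mult)
  also have "\<dots> \<le> 2 * sqrt (a * b) * (4/3 * exp (- A) + 2/3 * \<Delta> * \<bar>L\<bar>)"
    using p s0 by (intro mult_left_mono) auto
  also have "\<dots> = 4/3 * exp (- A) * (2 * sqrt (a * b)) + 4/3 * \<Delta> * (sqrt (a * b) * \<bar>L\<bar>)"
    by (simp add: algebra_simps)
  also have "\<dots> \<le> 4/3 * exp (- A) * (a + b) + 4/3 * \<Delta> * (2 * (a + b))"
    using arith_geo_mean_sqrt[of a b] sqrt_mult_abs_ln_diff_le[OF a b] a b D mult_pos_pos[OF a b] unfolding L_def
    by (intro add_mono mult_left_mono) auto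
  also have "\<dots> = (a + b) * (4/3 * (exp (- A) + 2 * \<Delta>))" by (simp add: algebra_simps)
  finally show ?thesis unfolding A_def L_def .
qed

section \<open>The feature maps\<close>

lemma list_inner_append:
  "length u1 = length v1 \<Longrightarrow> list_inner (u1 @ u2) (v1 @ v2) = list_inner u1 v1 + list_inner u2 v2"
  unfolding list_inner_def by (simp add: zip_append)

lemma list_inner_concat_map:
  "(\<And>z. z \<in> set xs \<Longrightarrow> length (f z) = length (g z)) \<Longrightarrow>
   list_inner (concat (map f xs)) (concat (map g xs)) = (\<Sum>z\<leftarrow>xs. list_inner (f z) (g z))"
  by (induction xs) (simp_all add: list_inner_append, simp add: list_inner_def)

lemma list_inner_map_uminus: "list_inner u (map uminus v) = - list_inner u v"
proof (induction u arbitrary: v)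
  case Nil thus ?case by (simp add: list_inner_def)
next
  case (Cons a u)
  thus ?case by (cases v) (auto simp: list_inner_def)
qed

lemma length_tau [simp]: "length (tau \<Delta> u w j) = 2"
  unfolding tau_def by simp

lemma length_concat_map_tau [simp]:
  "length (concat (map (\<lambda>z. tau \<Delta> (u z) (w z) (k z)) xs)) = 2 * length xs"
  "length (concat (map (\<lambda>z. map uminus (tau \<Delta> (u z) (w z) (k z))) xs)) = 2 * length xs"
  by (induction xs) auto

lemma list_inner_tau:
  assumes u: "u > 0" and v: "v > 0" and D: "\<Delta> \<ge> 0"
  shows "list_inner (tau \<Delta> u (wpt \<Delta> j) j) (tau \<Delta> v (wpt \<Delta> j) j)
           = 2 * sqrt (u * v) * (rho_bin \<Delta> j * cos (wpt \<Delta> j * (ln u - ln v)))"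
proof -
  define R where "R = rho_bin \<Delta> j"
  define w where "w = wpt \<Delta> j"
  have R: "R \<ge> 0" unfolding R_def using rho_bin_nonneg[OF D] .
  have "list_inner (tau \<Delta> u w j) (tau \<Delta> v w j) =
     sqrt (2 * u * R) * sqrt (2 * v * R) * (cos (w * ln u) * cos (w * ln v) + sin (w * ln u) * sin (w * ln v))"
    unfolding tau_def list_inner_def R_def rho_bin_def using u v by (simp add: algebra_simps)
  also have "sqrt (2 * u * R) * sqrt (2 * v * R) = 2 * sqrt (u * v) * R"
  proof -
    have "sqrt (2 * u * R) * sqrt (2 * v * R) = sqrt ((2 * R)^2 * (u * v))"
      by (simp add: real_sqrt_mult[symmetric] algebra_simps power2_eq_square)
    also have "\<dots> = 2 * R * sqrt (u * v)" using R by (simp add: real_sqrt_mult)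
    finally show ?thesis by simp
  qed
  also have "cos (w * ln u) * cos (w * ln v) + sin (w * ln u) * sin (w * ln v) = cos (w * (ln u - ln v))"
    by (simp add: cos_diff right_diff_distrib)
  finally show ?thesis unfolding R_def w_def by (simp add: mult.commute)
qed

definition tau_kernel :: "real \<Rightarrow> nat \<Rightarrow> real \<Rightarrow> real \<Rightarrow> real" where
  "tau_kernel \<Delta> J u v = (\<Sum>j=1..J. list_inner (tau \<Delta> u (wpt \<Delta> j) j) (tau \<Delta> v (wpt \<Delta> j) j))"

lemma tau_kernel_pos:
  "u > 0 \<Longrightarrow> v > 0 \<Longrightarrow> \<Delta> \<ge> 0 \<Longrightarrow>
     tau_kernel \<Delta> J u v = 2 * sqrt (u * v) * rho_cos_sum \<Delta> J (ln u - ln v)"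
  unfolding tau_kernel_def rho_cos_sum_def by (simp add: list_inner_tau sum_distrib_left)

lemma tau_kernel_zero: assumes "u = 0 \<or> v = 0" shows "tau_kernel \<Delta> J u v = 0"
proof -
  have "list_inner (tau \<Delta> u (wpt \<Delta> j) j) (tau \<Delta> v (wpt \<Delta> j) j) = 0" for j
    using assms unfolding tau_def list_inner_def by (cases "u = 0"; cases "v = 0") auto
  thus ?thesis unfolding tau_kernel_def by simp
qed

lemma abs_merge_loss_tau_kernel_le:
  assumes a: "a \<ge> 0" and b: "b \<ge> 0" and D: "\<Delta> > 0"
  shows "\<bar>merge_loss a b - tau_kernel \<Delta> J a b\<bar>
           \<le> (a + b) * (4/3 * (exp (- (real J * \<Delta>)) + 2 * \<Delta>))"
proof (cases "a = 0 \<or> b = 0")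
  case True
  thus ?thesis using tau_kernel_zero[OF True] merge_loss_zero[OF True] a b D by simp
next
  case False
  hence "a > 0" "b > 0" using a b by auto
  thus ?thesis using merge_loss_rho_cos_sum_approx[OF _ _ D] tau_kernel_pos[of a b \<Delta> J] D by simp
qed

lemma list_inner_eta:
  fixes p :: "'c::enum \<Rightarrow> 'x \<Rightarrow> real"
  shows "list_inner (eta1 \<Delta> J p x) (eta2 \<Delta> J p y) =
     tau_kernel \<Delta> J (\<Sum>c\<in>UNIV. p c x) (\<Sum>c\<in>UNIV. p c y)
     - (\<Sum>c\<in>UNIV. tau_kernel \<Delta> J (p c x) (p c y))"
proof -
  let ?inner = "\<lambda>u v j. list_inner (tau \<Delta> u (wpt \<Delta> j) j) (tau \<Delta> v (wpt \<Delta> j) j)"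
  have sum_upt: "(\<Sum>j\<leftarrow>[1..<J+1]. f j) = (\<Sum>j=1..J. f j)" for f :: "nat \<Rightarrow> real"
  proof -
    have "set [1..<J+1] = {1..J}" by auto
    thus ?thesis by (metis distinct_upt sum_list_distinct_conv_sum_set)
  qed
  have sum_enum: "(\<Sum>c\<leftarrow>(Enum.enum :: 'c list). f c) = (\<Sum>c\<in>UNIV. f c)" for f :: "'c \<Rightarrow> real"
    by (simp add: sum_list_distinct_conv_sum_set enum_distinct UNIV_enum)
  have block: "list_inner (concat (map (\<lambda>c. tau \<Delta> (p c x) (wpt \<Delta> j) j) Enum.enum))
      (concat (map (\<lambda>c. map uminus (tau \<Delta> (p c y) (wpt \<Delta> j) j)) Enum.enum))
      = - (\<Sum>c\<in>UNIV. ?inner (p c x) (p c y) j)" for j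
    by (subst list_inner_concat_map) (simp_all add: list_inner_map_uminus sum_enum sum_negf)
  have "list_inner (eta1 \<Delta> J p x) (eta2 \<Delta> J p y)
      = (\<Sum>j\<leftarrow>[1..<J+1]. ?inner (\<Sum>c\<in>UNIV. p c x) (\<Sum>c\<in>UNIV. p c y) j)
        + (\<Sum>j\<leftarrow>[1..<J+1]. - (\<Sum>c\<in>UNIV. ?inner (p c x) (p c y) j))"
    unfolding eta1_def eta2_def
    by (simp add: list_inner_append list_inner_concat_map block del: upt_Suc)
  also have "\<dots> = tau_kernel \<Delta> J (\<Sum>c\<in>UNIV. p c x) (\<Sum>c\<in>UNIV. p c y)
      - (\<Sum>c\<in>UNIV. tau_kernel \<Delta> J (p c x) (p c y))"
    unfolding sum_upt tau_kernel_def sum_negf by (subst sum.swap) simp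
  finally show ?thesis .
qed

lemma abs_MIL_minus_list_inner_eta_le:
  fixes p :: "'c::enum \<Rightarrow> 'x::finite \<Rightarrow> real"
  assumes nonneg: "\<And>c x. p c x \<ge> 0" and "x \<noteq> y" and "\<Delta> > 0"
  shows "\<bar>MIL p x y - list_inner (eta1 \<Delta> J p x) (eta2 \<Delta> J p y)\<bar>
           \<le> (marg_X p x + marg_X p y) * (8/3 * (exp (- (real J * \<Delta>)) + 2 * \<Delta>))"
proof -
  define E where "E = 4/3 * (exp (- (real J * \<Delta>)) + 2 * \<Delta>)"
  define err where "err = (\<lambda>u v. merge_loss u v - tau_kernel \<Delta> J u v)"
  have err_le: "\<bar>err u v\<bar> \<le> (u + v) * E" if "u \<ge> 0" "v \<ge> 0" for u v
    unfolding err_def E_def by (rule abs_merge_loss_tau_kernel_le[OF that \<open>\<Delta> > 0\<close>])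
  have "MIL p x y - list_inner (eta1 \<Delta> J p x) (eta2 \<Delta> J p y)
      = err (marg_X p x) (marg_X p y) - (\<Sum>c\<in>UNIV. err (p c x) (p c y))"
    unfolding MIL_eq_merge_loss[OF nonneg \<open>x \<noteq> y\<close>] list_inner_eta err_def marg_X_def
    by (simp add: sum_subtractf)
  also have "\<bar>\<dots>\<bar> \<le> (marg_X p x + marg_X p y) * E + (\<Sum>c\<in>UNIV. (p c x + p c y) * E)"
  proof -
    have "marg_X p x \<ge> 0" "marg_X p y \<ge> 0"
      unfolding marg_X_def by (simp_all add: nonneg sum_nonneg)
    moreover have "\<bar>\<Sum>c\<in>UNIV. err (p c x) (p c y)\<bar> \<le> (\<Sum>c\<in>UNIV. (p c x + p c y) * E)"
      by (rule order_trans[OF sum_abs sum_mono]) (simp add: err_le nonneg)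
    ultimately show ?thesis
      using err_le abs_triangle_ineq4[of "err (marg_X p x) (marg_X p y)"] by fastforce
  qed
  also have "(\<Sum>c\<in>UNIV. (p c x + p c y) * E) = (marg_X p x + marg_X p y) * E"
    unfolding marg_X_def by (simp only: sum.distrib[symmetric] sum_distrib_right)
  finally show ?thesis unfolding E_def by (simp add: field_simps)
qed

lemma marg_X_add_le_1:
  fixes p :: "'c::finite \<Rightarrow> 'x::finite \<Rightarrow> real"
  assumes nonneg: "\<And>c x. p c x \<ge> 0" and total: "(\<Sum>c\<in>UNIV. \<Sum>x\<in>UNIV. p c x) = 1" and "x \<noteq> y"
  shows "marg_X p x + marg_X p y \<le> 1"
proof -
  have "marg_X p x + marg_X p y = (\<Sum>z\<in>{x,y}. marg_X p z)" using \<open>x \<noteq> y\<close> by simp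
  also have "\<dots> \<le> (\<Sum>z\<in>UNIV. marg_X p z)"
    by (rule sum_mono2) (auto simp: marg_X_def intro: sum_nonneg nonneg)
  also have "\<dots> = 1" unfolding marg_X_def using total by (subst sum.swap) simp
  finally show ?thesis .
qed

lemma discretization_error_le:
  fixes \<epsilon> C \<Delta> :: real
  assumes "\<epsilon> > 0" "C \<ge> 1" "\<Delta> = \<epsilon> / (4 * (1 + C))"
    and "real J \<ge> 4 * (1 + C) / \<epsilon> * ln (8 * (1 + C) / \<epsilon>)"
  shows "8/3 * (exp (- (real J * \<Delta>)) + 2 * \<Delta>) \<le> \<epsilon>"
proof -
  have pos: "1 + C > 0" "8 * (1 + C) / \<epsilon> > 0" using assms(1,2) by simp_all
  have "4 * (1 + C) / \<epsilon> * \<Delta> = 1"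
    using pos assms(1) unfolding assms(3) by simp
  hence "ln (8 * (1 + C) / \<epsilon>) = 4 * (1 + C) / \<epsilon> * ln (8 * (1 + C) / \<epsilon>) * \<Delta>"
    by (metis mult.commute mult.left_commute mult_1)
  also have "\<dots> \<le> real J * \<Delta>"
    using assms(1,3,4) pos by (intro mult_right_mono) simp_all
  finally have "exp (- (real J * \<Delta>)) \<le> exp (- ln (8 * (1 + C) / \<epsilon>))" by simp
  also have "\<dots> = \<epsilon> / (8 * (1 + C))" using pos by (simp add: exp_minus)
  finally have "8/3 * (exp (- (real J * \<Delta>)) + 2 * \<Delta>) \<le> 8/3 * (\<epsilon> / (8 * (1 + C)) + 2 * \<Delta>)"
    by simp
  also have "\<dots> = 5/3 * (\<epsilon> / (1 + C))"
  proof -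
    define t where "t = \<epsilon> / (1 + C)"
    have "\<epsilon> / (8 * (1 + C)) = t / 8" "\<Delta> = t / 4"
      unfolding t_def assms(3) by simp_all
    hence "8/3 * (\<epsilon> / (8 * (1 + C)) + 2 * \<Delta>) = 5/3 * t" by simp
    thus ?thesis unfolding t_def .
  qed
  also have "\<dots> \<le> \<epsilon>"
    using pos assms(1,2) by (simp add: field_simps)
  finally show ?thesis .
qed

theorem mainTheorem11:
  fixes p :: "'c::enum \<Rightarrow> 'x::finite \<Rightarrow> real"
    and \<epsilon> \<Delta> :: real and J :: nat
  assumes p_nonneg: "\<forall>c x. p c x \<ge> 0"
    and p_sum: "(\<Sum>c\<in>UNIV. \<Sum>x\<in>UNIV. p c x) = 1"
    and eps_pos: "\<epsilon> > 0"
    and Delta_def: "\<Delta> = \<epsilon> / (4 * (1 + real CARD('c)))"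
    and J_pos: "J > 0"
    and J_bound: "real J \<ge> 4 * (1 + real CARD('c)) / \<epsilon> * ln (8 * (1 + real CARD('c)) / \<epsilon>)"
  shows "\<forall>x y. x \<noteq> y \<longrightarrow>
           \<bar>MIL p x y - list_inner (eta1 \<Delta> J p x) (eta2 \<Delta> J p y)\<bar> \<le> \<epsilon>"
proof (intro allI impI)
  fix x y :: 'x assume "x \<noteq> y"
  have nonneg: "\<And>c x. p c x \<ge> 0" using p_nonneg by blast
  have "\<Delta> > 0" using eps_pos unfolding Delta_def by (simp add: add_pos_nonneg)
  have "\<bar>MIL p x y - list_inner (eta1 \<Delta> J p x) (eta2 \<Delta> J p y)\<bar>
          \<le> (marg_X p x + marg_X p y) * (8/3 * (exp (- (real J * \<Delta>)) + 2 * \<Delta>))"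
    by (rule abs_MIL_minus_list_inner_eta_le) (use nonneg \<open>x \<noteq> y\<close> \<open>\<Delta> > 0\<close> in auto)
  also have "\<dots> \<le> 1 * \<epsilon>"
    using marg_X_add_le_1[of p, OF nonneg p_sum \<open>x \<noteq> y\<close>] \<open>\<Delta> > 0\<close>
          discretization_error_le[OF eps_pos _ Delta_def J_bound]
    by (intro mult_mono) (auto simp: marg_X_def intro: add_nonneg_nonneg sum_nonneg nonneg)
  finally show "\<bar>MIL p x y - list_inner (eta1 \<Delta> J p x) (eta2 \<Delta> J p y)\<bar> \<le> \<epsilon>" by simp
qed

end
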